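(* Let $(\widehat V,\sigma,m)$, $\mathbf{1}$, $V$ and $\operatorname{QS}$ be as in the context, and let $n\ge2$. Let $x\in T^{\le n}(V)$ with $\operatorname{QS}(x)=0$, and write $x=x_1+x_2$ with $x_1\in V^{\otimes n}$ and $x_2\in T^{\le n-1}(V)$. Then $T_n(x_1)=0$, where $T_n=\sum_{s\in\mathfrak{S}_n}T_s$ acts on $V^{\otimes n}$ through $\sigma_i\mapsto\mathrm{id}^{\otimes(i-1)}\otimes\sigma\otimes\mathrm{id}^{\otimes(n-i-1)}$.
   Context: $\mathbb{K}$ is a field; $T^{\le n}(V)=\bigoplus_{k\le n}V^{\otimes k}$. $\mathfrak{S}_n$ is generated by $s_i=(i,i+1)$; products are composed so that $(\sigma\tau)(x)=\tau(\sigma(x))$. Matsumoto–Tits section: for $s=s_{i_1}\cdots s_{i_l}$ reduced, $T_s=\sigma_{i_1}\cdots\sigma_{i_l}$ (independent of the choice). For $p,q\ge1$, $l\ge0$, $l+p+q\le n$: $\mathfrak{S}^{\uparrow l}_{p,q}$ is the set of $\sigma\in\mathfrak{S}_n$ fixing every $x\notin\{l+1,\dots,l+p+q\}$ with $\sigma^{-1}(l+1)<\cdots<\sigma^{-1}(l+p)$ and $\sigma^{-1}(l+p+1)<\cdots<\sigma^{-1}(l+p+q)$. Bubble decomposition: every $\sigma\in\mathfrak{S}_n$ factors uniquely as $\sigma^{(n-1)}\cdots\sigma^{(1)}$ with $\sigma^{(k)}\in\{e,s_k,s_{k-1}s_k,\dots,s_1\cdots s_k\}$; $t_k(\sigma)=t$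 if $\sigma^{(k)}=s_t\cdots s_k$, $0$ if $\sigma^{(k)}=e$, $t_n(\sigma)=0$. $\operatorname{GVB}_n^+$: monoid on $\sigma_i,\xi_i$ ($1\le i\le n-1$) with relations: for $|i-j|>1$, $\sigma_i\sigma_j=\sigma_j\sigma_i$, $\sigma_i\xi_j=\xi_j\sigma_i$, $\xi_i\xi_j=\xi_j\xi_i$; for $1\le i\le n-2$, $\sigma_i\sigma_{i+1}\sigma_i=\sigma_{i+1}\sigma_i\sigma_{i+1}$, $\xi_i\xi_{i+1}\xi_i=\xi_{i+1}\xi_i\xi_{i+1}$, $\xi_i\sigma_{i+1}\sigma_i=\sigma_{i+1}\sigma_i\xi_{i+1}$, $\xi_{i+1}\sigma_i\sigma_{i+1}=\sigma_i\sigma_{i+1}\xi_i$. $l_v(\tau)$ = number of $\xi$-letters in a word for $\tau$. $F(\sigma)=\prod_{k=n-1,\dots,1;\ \sigma^{(k)}\neq e}(\sigma_{t_k}+(1-\delta_{t_k+1,t_{k+1}})\sigma_1\cdots\sigma_{t_k-1}\xi_{t_k})\sigma_{t_k+1}\cdots\sigma_k$ ($t_k=t_k(\sigma)$, $k$ decreasing left to right, empty products $=e$). $\mathbf{M}_{p,q}(\sigma,\tau)=F(\sigma)\tau$ if $p-l_v(\tau)>0$ and $\sigma\in\mathfrak{S}^{\uparrow l_v(\tau)}_{p-l_v(\tau),q}$, else $0$ (linear in $\tau$); $\mathbf{M}_{p,q}(\sigma)=\mathbf{M}_{p,q}(\sigma,e)$. $Q(\sigma)=\mathbf{M}_{n-1,1}(\sigma^{(n-1)},\mathbf{M}_{n-2,1}(\sigma^{(n-2)},\dots,\mathbf{M}_{1,1}(\sigma^{(1)})\cdots))$,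 $Q_n=\sum_{\sigma\in\mathfrak{S}_n}Q(\sigma)$ ($Q_0=Q_1=e$). Braided algebra $(W,\sigma,m)$: linear $\sigma$ on $W\otimes W$ satisfying $(\sigma\otimes\mathrm{id})(\mathrm{id}\otimes\sigma)(\sigma\otimes\mathrm{id})=(\mathrm{id}\otimes\sigma)(\sigma\otimes\mathrm{id})(\mathrm{id}\otimes\sigma)$, associative $m$, $\sigma(\mathrm{id}\otimes m)=(m\otimes\mathrm{id})(\mathrm{id}\otimes\sigma)(\sigma\otimes\mathrm{id})$, $\sigma(m\otimes\mathrm{id})=(\mathrm{id}\otimes m)(\sigma\otimes\mathrm{id})(\mathrm{id}\otimes\sigma)$. Setting: $(\widehat V,\sigma,m)$ braided algebra, $\mathbf{1}\in\widehat V$, $V$ a complement of $\mathbb{K}\mathbf{1}$, $m(\mathbf{1}\otimes v)=m(v\otimes\mathbf{1})=v$, $\sigma(\mathbf{1}\otimes v)=v\otimes\mathbf{1}$, $\sigma(v\otimes\mathbf{1})=\mathbf{1}\otimes v$ for $v\in\widehat V$, and $\sigma,m$ restrict to a braided algebra on $V$. $\sigma^m(v\otimes w)=\mathbf{1}\otimes m(v\otimes w)$; $\mathbb{K}[\operatorname{GVB}_n^+]$ acts on $\widehat V^{\otimes n}$ via $\sigma_i\mapsto\mathrm{id}^{\otimes(i-1)}\otimes\sigma\otimes\mathrm{id}^{\otimes(n-i-1)}$, $\xi_i\mapsto\mathrm{id}^{\otimes(i-1)}\otimes\sigma^m\otimes\mathrm{id}^{\otimes(n-i-1)}$. $\mathbf{D}:T(\widehat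 V)\to T(V)$ deletes all factors $\mathbf{1}$ from pure tensors with factors in $V\cup\{\mathbf{1}\}$. $\operatorname{QS}_n=\mathbf{D}\circ Q_n:V^{\otimes n}\to T^{\le n}(V)$ and $\operatorname{QS}=\sum_{n\ge0}\operatorname{QS}_n\in\operatorname{End}(T(V))$. *)

theory Defs
  imports "HOL-Combinatorics.Permutations"
begin

(* V has basis indexed by the type 'b; \<hat>V = V \<oplus> K1 has basis
   'b option (None = the unit 1).  An element of T(\<hat>V) (resp. T(V)) is a
   finitely supported function 'b option list \<Rightarrow> 'k (resp. 'b list \<Rightarrow> 'k):
   the coefficient of each basis pure tensor (word).                   *)

definition delta_vec :: "'a \<Rightarrow> 'a \<Rightarrow> 'k::zero_neq_one" where
  "delta_vec w = (\<lambda>v. if v = w then 1 else 0)"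

definition lin_ext :: "('a \<Rightarrow> 'c \<Rightarrow> 'k::comm_semiring_1) \<Rightarrow> ('a \<Rightarrow> 'k) \<Rightarrow> 'c \<Rightarrow> 'k" where
  "lin_ext f X = (\<lambda>v. \<Sum>w\<in>{w. X w \<noteq> 0}. X w * f w v)"

text \<open>id^(i-1) \<otimes> c \<otimes> id^(...) on words (positions i, i+1, 1-based);
  c p q = coefficient of q in c(p).\<close>
definition pos_coef :: "nat \<Rightarrow> ('a \<times> 'a \<Rightarrow> 'a \<times> 'a \<Rightarrow> 'k::zero) \<Rightarrow> 'a list \<Rightarrow> 'a list \<Rightarrow> 'k" where
  "pos_coef i c w w' =
     (if 1 \<le> i \<and> i < length w \<and> length w' = length w
         \<and> (\<forall>j<length w. j \<noteq> i - 1 \<and> j \<noteq> i \<longrightarrow> w' ! j = w ! j)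
      then c (w ! (i - 1), w ! i) (w' ! (i - 1), w' ! i) else 0)"

text \<open>id^(i-1) \<otimes> m \<otimes> id^(...) on words (merges positions i, i+1).\<close>
definition mult_coef :: "nat \<Rightarrow> ('a \<times> 'a \<Rightarrow> 'a \<Rightarrow> 'k::zero) \<Rightarrow> 'a list \<Rightarrow> 'a list \<Rightarrow> 'k" where
  "mult_coef i m w w' =
     (if 1 \<le> i \<and> i < length w \<and> length w = Suc (length w')
         \<and> take (i - 1) w' = take (i - 1) w \<and> drop i w' = drop (i + 1) w
      then m (w ! (i - 1), w ! i) (w' ! (i - 1)) else 0)"

text \<open>Braided algebra (\<hat>V, \<sigma>, m) with unit 1 = None, V = span of Some b,
  satisfying the unit conditions and such that \<sigma>, m restrict to V.
  sig p q = coefficient of q in \<sigma>(p); mu p a = coefficient of a in m(p).\<close>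
definition braided_unital_setting ::
  "('b option \<times> 'b option \<Rightarrow> 'b option \<times> 'b option \<Rightarrow> 'k::field)
   \<Rightarrow> ('b option \<times> 'b option \<Rightarrow> 'b option \<Rightarrow> 'k) \<Rightarrow> bool" where
  "braided_unital_setting sig mu \<longleftrightarrow>
     (\<forall>p. finite {q. sig p q \<noteq> 0}) \<and> (\<forall>p. finite {a. mu p a \<noteq> 0}) \<and>
     (\<forall>w. length w = 3 \<longrightarrow>
        lin_ext (pos_coef 1 sig) (lin_ext (pos_coef 2 sig) (lin_ext (pos_coef 1 sig) (delta_vec w)))
      = lin_ext (pos_coef 2 sig) (lin_ext (pos_coef 1 sig) (lin_ext (pos_coef 2 sig) (delta_vec w)))) \<and>
     (\<forall>w. length w = 3 \<longrightarrow>
        lin_ext (mult_coef 1 mu) (lin_ext (mult_coef 1 mu) (delta_vec w))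
      = lin_ext (mult_coef 1 mu) (lin_ext (mult_coef 2 mu) (delta_vec w))) \<and>
     (\<forall>w. length w = 3 \<longrightarrow>
        lin_ext (pos_coef 1 sig) (lin_ext (mult_coef 2 mu) (delta_vec w))
      = lin_ext (mult_coef 1 mu) (lin_ext (pos_coef 2 sig) (lin_ext (pos_coef 1 sig) (delta_vec w)))) \<and>
     (\<forall>w. length w = 3 \<longrightarrow>
        lin_ext (pos_coef 1 sig) (lin_ext (mult_coef 1 mu) (delta_vec w))
      = lin_ext (mult_coef 2 mu) (lin_ext (pos_coef 1 sig) (lin_ext (pos_coef 2 sig) (delta_vec w)))) \<and>
     (\<forall>a. mu (None, a) = delta_vec a \<and> mu (a, None) = delta_vec a) \<and>
     (\<forall>a. sig (None, a) = delta_vec (a, None) \<and> sig (a, None) = delta_vec (None, a)) \<and>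
     (\<forall>a b c d. sig (Some a, Some b) (c, d) \<noteq> 0 \<longrightarrow> c \<noteq> None \<and> d \<noteq> None) \<and>
     (\<forall>a b c. mu (Some a, Some b) c \<noteq> 0 \<longrightarrow> c \<noteq> None)"

text \<open>\<sigma>^m(v \<otimes> w) = 1 \<otimes> m(v \<otimes> w).\<close>
definition sigma_m :: "('b option \<times> 'b option \<Rightarrow> 'b option \<Rightarrow> 'k::zero)
   \<Rightarrow> 'b option \<times> 'b option \<Rightarrow> 'b option \<times> 'b option \<Rightarrow> 'k" where
  "sigma_m mu p q = (if fst q = None then mu p (snd q) else 0)"

(* The monoid GVB_n^+ : elements of K[GVB_n^+] with nonnegative integer
   coefficients are represented as formal sums (lists) of words in the
   generators.  *)

datatype gen = Sg nat | Xi nat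

fun gen_coef :: "('a \<times> 'a \<Rightarrow> 'a \<times> 'a \<Rightarrow> 'k::zero) \<Rightarrow> ('a \<times> 'a \<Rightarrow> 'a \<times> 'a \<Rightarrow> 'k)
                 \<Rightarrow> gen \<Rightarrow> 'a list \<Rightarrow> 'a list \<Rightarrow> 'k" where
  "gen_coef c cx (Sg i) = pos_coef i c"
| "gen_coef c cx (Xi i) = pos_coef i cx"

definition act_word :: "('a \<times> 'a \<Rightarrow> 'a \<times> 'a \<Rightarrow> 'k::comm_semiring_1) \<Rightarrow> ('a \<times> 'a \<Rightarrow> 'a \<times> 'a \<Rightarrow> 'k)
                 \<Rightarrow> gen list \<Rightarrow> ('a list \<Rightarrow> 'k) \<Rightarrow> 'a list \<Rightarrow> 'k" where
  "act_word c cx ws X = foldr (\<lambda>g Y. lin_ext (gen_coef c cx g) Y) ws X"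

definition lv :: "gen list \<Rightarrow> nat" where
  "lv ws = length (filter (\<lambda>g. case g of Xi _ \<Rightarrow> True | Sg _ \<Rightarrow> False) ws)"

definition fmult :: "gen list list \<Rightarrow> gen list list \<Rightarrow> gen list list" where
  "fmult A B = [a @ b. a \<leftarrow> A, b \<leftarrow> B]"

(* Permutations.  Paper product: (\<sigma>\<tau>)(x) = \<tau>(\<sigma>(x)), i.e. \<sigma>\<tau> = \<tau> \<circ> \<sigma>.      *)

definition st :: "nat \<Rightarrow> nat \<Rightarrow> nat" where
  "st i = (\<lambda>x. if x = i then Suc i else if x = Suc i then i else x)"

text \<open>Paper product s_{i1} ... s_{il} of a word of simple transpositions.\<close>
definition permword :: "nat list \<Rightarrow> nat \<Rightarrow> nat" where
  "permword is = fold (\<lambda>i f. st i \<circ> f) is id"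

definition cyc :: "nat \<Rightarrow> nat \<Rightarrow> nat \<Rightarrow> nat" where
  "cyc t k = permword [t..<Suc k]"

definition bfac :: "(nat \<Rightarrow> nat) \<Rightarrow> nat \<Rightarrow> nat \<Rightarrow> nat" where
  "bfac ts k = (if ts k = 0 then id else cyc (ts k) k)"

text \<open>Paper product \<sigma>^(n-1) ... \<sigma>^(1) with \<sigma>^(k) = bfac ts k.\<close>
definition bubble :: "nat \<Rightarrow> (nat \<Rightarrow> nat) \<Rightarrow> nat \<Rightarrow> nat" where
  "bubble n ts = foldr (\<lambda>k f. bfac ts k \<circ> f) [1..<n] id"

definition valid_ts :: "nat \<Rightarrow> (nat \<Rightarrow> nat) \<Rightarrow> bool" where
  "valid_ts n ts \<longleftrightarrow> (\<forall>k. ts k \<noteq> 0 \<longrightarrow> 1 \<le> k \<and> k < n \<and> ts k \<le> k)"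

text \<open>t_k(\<sigma>) for \<sigma> in S_n (0 for k outside 1..n-1; in particular t_n = 0).\<close>
definition tk :: "nat \<Rightarrow> (nat \<Rightarrow> nat) \<Rightarrow> nat \<Rightarrow> nat" where
  "tk n \<sigma> = (THE ts. valid_ts n ts \<and> bubble n ts = \<sigma>)"

definition bcomp :: "nat \<Rightarrow> (nat \<Rightarrow> nat) \<Rightarrow> nat \<Rightarrow> nat \<Rightarrow> nat" where
  "bcomp n \<sigma> k = bfac (tk n \<sigma>) k"

definition Ffac :: "nat \<Rightarrow> (nat \<Rightarrow> nat) \<Rightarrow> nat \<Rightarrow> gen list list" where
  "Ffac n \<sigma> k =
     (let t = tk n \<sigma> k; t' = tk n \<sigma> (Suc k); rest = map Sg [Suc t..<Suc k] in
      if t = 0 then [[]]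
      else if Suc t = t' then [[Sg t] @ rest]
      else [[Sg t] @ rest, map Sg [1..<t] @ [Xi t] @ rest])"

definition Fgvb :: "nat \<Rightarrow> (nat \<Rightarrow> nat) \<Rightarrow> gen list list" where
  "Fgvb n \<sigma> = foldr (\<lambda>k acc. fmult (Ffac n \<sigma> k) acc) (rev [1..<n]) [[]]"

definition shufset :: "nat \<Rightarrow> nat \<Rightarrow> nat \<Rightarrow> nat \<Rightarrow> (nat \<Rightarrow> nat) set" where
  "shufset n l p q = {\<sigma>. \<sigma> permutes {1..n} \<and>
       (\<forall>x. x \<notin> {l+1..l+p+q} \<longrightarrow> \<sigma> x = x) \<and>
       (\<forall>a b. l+1 \<le> a \<and> a < b \<and> b \<le> l+p \<longrightarrow> inv \<sigma> a < inv \<sigma> b) \<and>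
       (\<forall>a b. l+p+1 \<le> a \<and> a < b \<and> b \<le> l+p+q \<longrightarrow> inv \<sigma> a < inv \<sigma> b)}"

definition Mgvb :: "nat \<Rightarrow> nat \<Rightarrow> nat \<Rightarrow> (nat \<Rightarrow> nat) \<Rightarrow> gen list list \<Rightarrow> gen list list" where
  "Mgvb n p q \<sigma> T = concat (map (\<lambda>\<tau>.
      if lv \<tau> < p \<and> \<sigma> \<in> shufset n (lv \<tau>) (p - lv \<tau>) q
      then map (\<lambda>w. w @ \<tau>) (Fgvb n \<sigma>) else []) T)"

fun Qrec :: "nat \<Rightarrow> (nat \<Rightarrow> nat) \<Rightarrow> nat \<Rightarrow> gen list list" where
  "Qrec n \<sigma> 0 = [[]]"
| "Qrec n \<sigma> (Suc k) = Mgvb n (Suc k) 1 (bcomp n \<sigma> (Suc k)) (Qrec n \<sigma> k)"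

definition Qgvb :: "nat \<Rightarrow> (nat \<Rightarrow> nat) \<Rightarrow> gen list list" where
  "Qgvb n \<sigma> = Qrec n \<sigma> (n - 1)"

definition Qact :: "('b option \<times> 'b option \<Rightarrow> 'b option \<times> 'b option \<Rightarrow> 'k::field)
   \<Rightarrow> ('b option \<times> 'b option \<Rightarrow> 'b option \<Rightarrow> 'k) \<Rightarrow> nat
   \<Rightarrow> ('b option list \<Rightarrow> 'k) \<Rightarrow> 'b option list \<Rightarrow> 'k" where
  "Qact sig mu n X = (\<lambda>v. \<Sum>\<sigma>\<in>{\<sigma>. \<sigma> permutes {1..n}}.
       sum_list (map (\<lambda>\<tau>. act_word sig (sigma_m mu) \<tau> X v) (Qgvb n \<sigma>)))"

definition iota :: "('b list \<Rightarrow> 'k::zero) \<Rightarrow> 'b option list \<Rightarrow> 'k" where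
  "iota x = (\<lambda>w. if None \<notin> set w then x (map the w) else 0)"

definition Ddel :: "('b option list \<Rightarrow> 'k::comm_monoid_add) \<Rightarrow> 'b list \<Rightarrow> 'k" where
  "Ddel X = (\<lambda>v. \<Sum>w\<in>{w. X w \<noteq> 0 \<and> map the (filter (\<lambda>a. a \<noteq> None) w) = v}. X w)"

definition deg :: "nat \<Rightarrow> ('a list \<Rightarrow> 'k::zero) \<Rightarrow> 'a list \<Rightarrow> 'k" where
  "deg k x = (\<lambda>w. if length w = k then x w else 0)"

definition QSn :: "('b option \<times> 'b option \<Rightarrow> 'b option \<times> 'b option \<Rightarrow> 'k::field)
   \<Rightarrow> ('b option \<times> 'b option \<Rightarrow> 'b option \<Rightarrow> 'k) \<Rightarrow> nat \<Rightarrow> ('b list \<Rightarrow> 'k) \<Rightarrow> 'b list \<Rightarrow> 'k" where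
  "QSn sig mu n x = Ddel (Qact sig mu n (iota x))"

definition QS :: "('b option \<times> 'b option \<Rightarrow> 'b option \<times> 'b option \<Rightarrow> 'k::field)
   \<Rightarrow> ('b option \<times> 'b option \<Rightarrow> 'b option \<Rightarrow> 'k) \<Rightarrow> ('b list \<Rightarrow> 'k) \<Rightarrow> 'b list \<Rightarrow> 'k" where
  "QS sig mu x = (\<lambda>v. \<Sum>k\<in>length ` {w. x w \<noteq> 0}. QSn sig mu k (deg k x) v)"

definition reduced_word :: "nat \<Rightarrow> (nat \<Rightarrow> nat) \<Rightarrow> nat list \<Rightarrow> bool" where
  "reduced_word n s is \<longleftrightarrow> set is \<subseteq> {1..<n} \<and> permword is = s \<and>
     (\<forall>js. set js \<subseteq> {1..<n} \<and> permword js = s \<longrightarrow> length is \<le> length js)"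

definition sigV :: "('b option \<times> 'b option \<Rightarrow> 'b option \<times> 'b option \<Rightarrow> 'k)
   \<Rightarrow> 'b \<times> 'b \<Rightarrow> 'b \<times> 'b \<Rightarrow> 'k" where
  "sigV sig p q = sig (Some (fst p), Some (snd p)) (Some (fst q), Some (snd q))"

definition Tn :: "('b option \<times> 'b option \<Rightarrow> 'b option \<times> 'b option \<Rightarrow> 'k::field)
   \<Rightarrow> nat \<Rightarrow> ('b list \<Rightarrow> 'k) \<Rightarrow> 'b list \<Rightarrow> 'k" where
  "Tn sig n x = (\<lambda>v. \<Sum>s\<in>{s. s permutes {1..n}}.
       act_word (sigV sig) (\<lambda>_ _. 0) (map Sg (SOME is. reduced_word n s is)) x v)"

end

theory Submission
  imports Defs
begin

text \<open>\<open>Q\<^sub>n\<close> is a sum over \<open>\<sigma> \<in> \<SS>\<^sub>n\<close> of formal sums \<open>Q(\<sigma>)\<close> of words in the \<open>\<sigma>\<^sub>i\<close> and \<open>\<xi>\<^sub>i\<close>.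
  On \<open>V\<^sup>\<otimes>\<^sup>n \<subseteq> \<widehat>V\<^sup>\<otimes>\<^sup>n\<close>, a word containing some \<open>\<xi>\<^sub>i\<close> only produces tensors with a factor \<open>1\<close>:
  \<open>\<xi>\<^sub>i\<close> creates one and, by the unit axioms, \<open>\<sigma>\<close> moves units without destroying them. So \<open>D\<close> sends
  these terms to degree \<open>< n\<close>. The \<open>\<xi>\<close>-free part of \<open>Q(\<sigma>)\<close> is a single word, the bubble-sort
  word of \<open>\<sigma>\<close>, which is reduced and hence braid equivalent to any reduced word of \<open>\<sigma>\<close>; as \<open>\<sigma>\<close>
  restricts to a braiding of \<open>V\<close>, it acts as \<open>T\<^sub>\<sigma>\<close>. Since \<open>QS\<^sub>k\<close> lands in degree \<open>\<le> k\<close>, the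
  degree-\<open>n\<close> component of \<open>QS(x)\<close> is exactly \<open>T\<^sub>n(x\<^sub>1)\<close>, which must therefore vanish.\<close>

section \<open>Bubble-sort normal form of permutations\<close>

lemma fold_st_comp_id: "fold (\<lambda>i f. st i \<circ> f) ws (g::nat\<Rightarrow>nat) = fold (\<lambda>i f. st i \<circ> f) ws id \<circ> g"
proof (induction ws arbitrary: g)
  case Nil then show ?case by simp
next
  case (Cons i ws)
  have "fold (\<lambda>i f. st i \<circ> f) (i # ws) g = fold (\<lambda>i f. st i \<circ> f) ws (st i \<circ> g)" by simp
  also have "\<dots> = fold (\<lambda>i f. st i \<circ> f) ws id \<circ> (st i \<circ> g)" by (rule Cons)
  also have "\<dots> = (fold (\<lambda>i f. st i \<circ> f) ws id \<circ> st i) \<circ> g" by (simp only: comp_assoc)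
  also have "fold (\<lambda>i f. st i \<circ> f) ws id \<circ> st i = fold (\<lambda>i f. st i \<circ> f) ws (st i)" by (rule Cons[symmetric])
  also have "fold (\<lambda>i f. st i \<circ> f) ws (st i) = fold (\<lambda>i f. st i \<circ> f) (i # ws) id" by simp
  finally show ?case .
qed

lemma permword_Nil[simp]: "permword [] = id"
  by (simp add: permword_def)

lemma permword_append: "permword (a @ b) = permword b \<circ> permword a"
  unfolding permword_def by (simp add: fold_st_comp_id[of b "fold (\<lambda>i f. st i \<circ> f) a id"])

lemma permword_Cons: "permword (i # w) = permword w \<circ> st i"
  using permword_append[of "[i]" w] by (simp add: permword_def)

lemma st_st_id: "st i \<circ> st i = id"
  by (auto simp: st_def fun_eq_iff)

lemma st_permutes: "1 \<le> i \<Longrightarrow> i < N \<Longrightarrow> st i permutes {1..N}"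
  unfolding st_def by (rule permutes_swap_id[unfolded transpose_def]) auto

lemma permword_permutes: "set w \<subseteq> {1..<N} \<Longrightarrow> permword w permutes {1..N}"
proof (induction w)
  case (Cons i w)
  then show ?case unfolding permword_Cons by (intro permutes_compose st_permutes) auto
qed simp

definition bubble_block :: "(nat \<Rightarrow> nat) \<Rightarrow> nat \<Rightarrow> nat list" where
  "bubble_block ts k = (if ts k = 0 then [] else [ts k..<Suc k])"

definition bubble_word :: "nat \<Rightarrow> (nat \<Rightarrow> nat) \<Rightarrow> nat list" where
  "bubble_word n ts = concat (map (bubble_block ts) (rev [1..<n]))"

lemma bubble_word_Suc: "1 \<le> k \<Longrightarrow> bubble_word (Suc k) ts = bubble_block ts k @ bubble_word k ts"
  by (simp add: bubble_word_def)

lemma bubble_word_le_1: "n \<le> 1 \<Longrightarrow> bubble_word n ts = []"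
  by (simp add: bubble_word_def)

lemma bubble_word_cong:
  "(\<And>j. 1 \<le> j \<Longrightarrow> j < n \<Longrightarrow> ts j = ts' j) \<Longrightarrow> bubble_word n ts = bubble_word n ts'"
  unfolding bubble_word_def by (intro arg_cong[where f=concat] map_cong) (auto simp: bubble_block_def)

lemma bubble_word_zero: "bubble_word n (\<lambda>_. 0) = []"
  by (simp add: bubble_word_def bubble_block_def)

lemma permword_bubble_block: "permword (bubble_block ts k) = bfac ts k"
  by (simp add: bubble_block_def bfac_def cyc_def)

lemma permword_concat_bubble_block:
  "permword (concat (map (bubble_block ts) (rev ks))) = foldr (\<lambda>k f. bfac ts k \<circ> f) ks id"
  by (induction ks) (simp_all add: permword_append permword_bubble_block)

lemma permword_bubble_word: "permword (bubble_word n ts) = bubble n ts"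
  by (simp add: bubble_word_def bubble_def permword_concat_bubble_block)

lemma set_bubble_word: "valid_ts n ts \<Longrightarrow> set (bubble_word n ts) \<subseteq> {1..<n}"
  unfolding bubble_word_def bubble_block_def valid_ts_def by (auto split: if_splits)

lemma bubble_permutes: "valid_ts n ts \<Longrightarrow> bubble n ts permutes {1..n}"
  by (metis permword_bubble_word permword_permutes set_bubble_word)

lemma bubble_Suc: "1 \<le> m \<Longrightarrow> bubble (Suc m) ts = bubble m ts \<circ> bfac ts m"
proof -
  have foldr_comp: "foldr (\<lambda>k f. bfac ts k \<circ> f) ks g = foldr (\<lambda>k f. bfac ts k \<circ> f) ks id \<circ> g" for ks g
    by (induction ks) (simp_all add: comp_assoc)
  assume "1 \<le> m"
  then have "[1..<Suc m] = [1..<m] @ [m]" by simp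
  then show ?thesis unfolding bubble_def by (simp add: foldr_comp[of _ "bfac ts m"])
qed

lemma bubble_cong: "(\<And>j. 1 \<le> j \<Longrightarrow> j < n \<Longrightarrow> ts j = ts' j) \<Longrightarrow> bubble n ts = bubble n ts'"
  by (metis permword_bubble_word bubble_word_cong)

lemma cyc_apply:
  "1 \<le> t \<Longrightarrow> t \<le> Suc K \<Longrightarrow>
   cyc t K x = (if x = t then Suc K else if t < x \<and> x \<le> Suc K then x - 1 else x)"
proof (induction K arbitrary: x)
  case 0
  then show ?case by (simp add: cyc_def)
next
  case (Suc K)
  show ?case
  proof (cases "t = Suc (Suc K)")
    case True then show ?thesis by (simp add: cyc_def)
  next
    case False
    then have "t \<le> Suc K" using Suc.prems by simp
    moreover from this have "cyc t (Suc K) = st (Suc K) \<circ> cyc t K"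
      by (simp add: cyc_def permword_append permword_def)
    ultimately show ?thesis using Suc.IH Suc.prems(1) by (auto simp: st_def)
  qed
qed

lemma cyc_permutes: "1 \<le> t \<Longrightarrow> t \<le> Suc K \<Longrightarrow> Suc K \<le> N \<Longrightarrow> cyc t K permutes {1..N}"
  unfolding cyc_def by (rule permword_permutes) auto

lemma bfac_permutes: "ts k \<le> k \<Longrightarrow> bfac ts k permutes {1..Suc k}"
  using cyc_permutes[of "ts k" k "Suc k"] by (cases "ts k = 0") (simp_all add: bfac_def permutes_id)

text \<open>Among \<open>\<sigma>\<^sup>(\<^sup>1\<^sup>), \<dots>, \<sigma>\<^sup>(\<^sup>k\<^sup>)\<close> only \<open>\<sigma>\<^sup>(\<^sup>k\<^sup>)\<close> moves \<open>k + 1\<close>, and the letter it sends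
  there recovers \<open>t\<^sub>k\<close>; this makes the bubble decomposition unique.\<close>

lemma bfac_to_Suc: "ts k \<le> k \<Longrightarrow> bfac ts k (if ts k = 0 then Suc k else ts k) = Suc k"
  by (cases "ts k = 0") (simp_all add: bfac_def cyc_apply)

lemma valid_ts_le: "valid_ts n ts \<Longrightarrow> ts k \<le> k"
  by (cases "ts k = 0") (simp_all add: valid_ts_def)

lemma valid_ts_Suc_restrict: "valid_ts (Suc m) ts \<Longrightarrow> valid_ts m (ts(m := 0))"
  by (auto simp: valid_ts_def less_Suc_eq)

lemma bubble_restrict_top: "bubble m (ts(m := 0)) = bubble m ts"
  by (rule bubble_cong) simp

lemma bubble_pred_permutes: "valid_ts (Suc m) ts \<Longrightarrow> bubble m ts permutes {1..m}"
  using bubble_permutes[OF valid_ts_Suc_restrict] by (simp add: bubble_restrict_top)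

lemma bubble_to_top:
  assumes "valid_ts (Suc m) ts" "1 \<le> m"
  shows "bubble (Suc m) ts (if ts m = 0 then Suc m else ts m) = Suc m"
proof -
  have "bubble m ts (Suc m) = Suc m"
    using bubble_pred_permutes[OF assms(1)] by (auto intro: permutes_not_in)
  moreover have "ts m \<le> m" using assms(1) by (rule valid_ts_le)
  ultimately show ?thesis by (simp add: bubble_Suc[OF assms(2)] bfac_to_Suc)
qed

lemma valid_ts_le_1: "n \<le> 1 \<Longrightarrow> valid_ts n ts \<Longrightarrow> ts = (\<lambda>_. 0)"
  by (auto simp: valid_ts_def fun_eq_iff)

lemma bubble_inj:
  "valid_ts n ts1 \<Longrightarrow> valid_ts n ts2 \<Longrightarrow> bubble n ts1 = bubble n ts2 \<Longrightarrow> ts1 = ts2"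
proof (induction n arbitrary: ts1 ts2)
  case 0 then show ?case using valid_ts_le_1[of 0] by auto
next
  case (Suc m)
  show ?case
  proof (cases "m = 0")
    case True then show ?thesis using Suc.prems valid_ts_le_1[of "Suc m"] by auto
  next
    case False
    then have m: "1 \<le> m" by simp
    have le: "ts1 m \<le> m" "ts2 m \<le> m" using Suc.prems(1,2) by (simp_all add: valid_ts_le)
    have "inj (bubble (Suc m) ts1)" by (rule permutes_inj[OF bubble_permutes[OF Suc.prems(1)]])
    moreover have "bubble (Suc m) ts1 (if ts1 m = 0 then Suc m else ts1 m)
                 = bubble (Suc m) ts1 (if ts2 m = 0 then Suc m else ts2 m)"
      using bubble_to_top[OF Suc.prems(1) m] bubble_to_top[OF Suc.prems(2) m] Suc.prems(3) by simp
    ultimately have "(if ts1 m = 0 then Suc m else ts1 m) = (if ts2 m = 0 then Suc m else ts2 m)"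
      by (rule injD)
    then have top: "ts1 m = ts2 m" using le by (auto split: if_splits)
    have "bfac ts1 m = bfac ts2 m" using top by (simp add: bfac_def)
    then have "bubble m ts1 \<circ> bfac ts1 m = bubble m ts2 \<circ> bfac ts1 m"
      using Suc.prems(3) by (simp add: bubble_Suc[OF m] comp_def)
    then have "bubble m ts1 = bubble m ts2"
      using permutes_inv_o(1)[OF bfac_permutes[of ts1 m, OF le(1)]] by (metis comp_assoc comp_id)
    then have "bubble m (ts1(m := 0)) = bubble m (ts2(m := 0))"
      by (simp add: bubble_restrict_top)
    then have "ts1(m := 0) = ts2(m := 0)"
      by (rule Suc.IH[OF valid_ts_Suc_restrict[OF Suc.prems(1)] valid_ts_Suc_restrict[OF Suc.prems(2)]])
    then show ?thesis using top by (metis fun_upd_triv fun_upd_upd)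
  qed
qed

lemma permutes_fix_top:
  assumes "\<sigma> permutes {1..Suc m}" "\<sigma> (Suc m) = Suc m"
  shows "\<sigma> permutes {1..m}"
  unfolding permutes_def
proof (intro conjI allI impI)
  fix x assume "x \<notin> {1..m}"
  then show "\<sigma> x = x" using assms by (cases "x = Suc m") (auto simp: permutes_def)
next
  fix y show "\<exists>!x. \<sigma> x = y" using assms(1) by (simp add: permutes_def)
qed

lemma ex_bfac_peel_top:
  assumes "\<sigma> permutes {1..Suc m}"
  shows "\<exists>t\<le>m. \<sigma> \<circ> inv (bfac ((\<lambda>_. 0)(m := t)) m) permutes {1..m}"
proof -
  define p where "p = inv \<sigma> (Suc m)"
  have sp: "\<sigma> p = Suc m" unfolding p_def using permutes_inverses[OF assms] by simp
  have "p \<in> {1..Suc m}" unfolding p_def using permutes_in_image[OF permutes_inv[OF assms]] by auto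
  define t where "t = (if p = Suc m then 0 else p)"
  have t: "t \<le> m" "p = (if t = 0 then Suc m else t)"
    using \<open>p \<in> {1..Suc m}\<close> unfolding t_def by auto
  define b where "b = bfac ((\<lambda>_. 0)(m := t)) m"
  have bp: "b permutes {1..Suc m}" unfolding b_def using t by (intro bfac_permutes) simp
  have "b p = Suc m" unfolding b_def t(2)
    by (rule bfac_to_Suc[of "(\<lambda>_. 0)(m := t)" m, unfolded fun_upd_same]) (simp add: t(1))
  then have "(\<sigma> \<circ> inv b) (Suc m) = Suc m"
    using sp permutes_inverses(2)[OF bp, of p] by simp
  moreover have "\<sigma> \<circ> inv b permutes {1..Suc m}"
    by (intro permutes_compose permutes_inv bp assms)
  ultimately have "\<sigma> \<circ> inv b permutes {1..m}"
    by (rule permutes_fix_top[rotated])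
  then show ?thesis using t(1) unfolding b_def by blast
qed

lemma ex_bubble: "\<sigma> permutes {1..n} \<Longrightarrow> \<exists>ts. valid_ts n ts \<and> bubble n ts = \<sigma>"
proof (induction n arbitrary: \<sigma>)
  case (Suc m)
  show ?case
  proof (cases "m = 0")
    case True
    then have "\<sigma> = id" using Suc.prems by simp
    then show ?thesis using True by (intro exI[of _ "\<lambda>_. 0"]) (simp add: valid_ts_def bubble_def)
  next
    case False
    then have m: "1 \<le> m" by simp
    obtain t where t: "t \<le> m" and "\<sigma> \<circ> inv (bfac ((\<lambda>_. 0)(m := t)) m) permutes {1..m}"
      using ex_bfac_peel_top[OF Suc.prems] by blast
    moreover define b where "b = bfac ((\<lambda>_. 0)(m := t)) m"
    ultimately obtain ts where ts: "valid_ts m ts" "bubble m ts = \<sigma> \<circ> inv b" using Suc.IH by blast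
    have "ts m = 0" using ts(1) by (auto simp: valid_ts_def)
    then have "valid_ts (Suc m) (ts(m := t))"
      using ts(1) t m by (auto simp: valid_ts_def less_Suc_eq)
    moreover have "bubble (Suc m) (ts(m := t)) = \<sigma>"
    proof -
      have "bubble m (ts(m := t)) = bubble m ts" by (rule bubble_cong) auto
      then have "bubble (Suc m) (ts(m := t)) = (\<sigma> \<circ> inv b) \<circ> b"
        using ts(2) by (simp add: bubble_Suc[OF m] b_def bfac_def)
      moreover have "b permutes {1..Suc m}" unfolding b_def using t by (intro bfac_permutes) simp
      ultimately show ?thesis by (simp add: comp_assoc permutes_inv_o(2))
    qed
    ultimately show ?thesis by blast
  qed
qed (intro exI[of _ "\<lambda>_. 0"], simp add: valid_ts_def bubble_def)

lemma tk_valid_bubble: "\<sigma> permutes {1..n} \<Longrightarrow> valid_ts n (tk n \<sigma>) \<and> bubble n (tk n \<sigma>) = \<sigma>"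
proof -
  assume "\<sigma> permutes {1..n}"
  then have "\<exists>!ts. valid_ts n ts \<and> bubble n ts = \<sigma>"
    using ex_bubble bubble_inj by metis
  then show ?thesis unfolding tk_def by (rule theI')
qed

lemma tk_bubble: "valid_ts n ts \<Longrightarrow> tk n (bubble n ts) = ts"
  unfolding tk_def by (rule the_equality) (auto intro: bubble_inj)

section \<open>Braid moves and reduced words\<close>

inductive braid_equiv :: "nat \<Rightarrow> nat list \<Rightarrow> nat list \<Rightarrow> bool" for N where
  refl_word: "braid_equiv N w w"
| sym_word: "braid_equiv N w v \<Longrightarrow> braid_equiv N v w"
| trans_word: "braid_equiv N u v \<Longrightarrow> braid_equiv N v w \<Longrightarrow> braid_equiv N u w"
| far_commute: "1 \<le> i \<Longrightarrow> i < N \<Longrightarrow> 1 \<le> j \<Longrightarrow> j < N \<Longrightarrow> i + 2 \<le> j \<Longrightarrow>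
          braid_equiv N (p @ [i, j] @ q) (p @ [j, i] @ q)"
| braid_move: "1 \<le> i \<Longrightarrow> Suc i < N \<Longrightarrow>
          braid_equiv N (p @ [i, Suc i, i] @ q) (p @ [Suc i, i, Suc i] @ q)"

lemma braid_equiv_append: "braid_equiv N u v \<Longrightarrow> braid_equiv N (p @ u @ q) (p @ v @ q)"
proof (induction rule: braid_equiv.induct)
  case (refl_word w) then show ?case by (rule braid_equiv.refl_word)
next
  case (sym_word w v) show ?case by (rule braid_equiv.sym_word[OF sym_word.IH])
next
  case (trans_word u v w) show ?case by (rule braid_equiv.trans_word[OF trans_word.IH(1) trans_word.IH(2)])
next
  case (far_commute i j p' q')
  then show ?case using braid_equiv.far_commute[where i=i and j=j and p="p @ p'" and q="q' @ q"] by simp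
next
  case (braid_move i p' q')
  then show ?case using braid_equiv.braid_move[where i=i and p="p @ p'" and q="q' @ q"] by simp
qed

lemma braid_equiv_Cons: "braid_equiv N u v \<Longrightarrow> braid_equiv N (a # u) (a # v)"
  using braid_equiv_append[of N u v "[a]" "[]"] by simp

lemma braid_equiv_append_left: "braid_equiv N u v \<Longrightarrow> braid_equiv N (p @ u) (p @ v)"
  using braid_equiv_append[of N u v p "[]"] by simp

lemma braid_equiv_append_right: "braid_equiv N u v \<Longrightarrow> braid_equiv N (u @ q) (v @ q)"
  using braid_equiv_append[of N u v "[]" q] by simp

lemma st_comm: "i + 2 \<le> j \<Longrightarrow> st i \<circ> st j = st j \<circ> st i"
  by (auto simp: st_def fun_eq_iff)

lemma st_braid: "st i \<circ> st (Suc i) \<circ> st i = st (Suc i) \<circ> st i \<circ> st (Suc i)"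
  by (auto simp: st_def fun_eq_iff)

lemma braid_equiv_permword: "braid_equiv N u v \<Longrightarrow> permword u = permword v"
proof (induction rule: braid_equiv.induct)
  case (far_commute i j p q)
  have e: "permword [i, j] = permword [j, i]"
    using st_comm[OF far_commute(5)] by (simp add: permword_def)
  show ?case by (simp only: permword_append e)
next
  case (braid_move i p q)
  have e: "permword [i, Suc i, i] = permword [Suc i, i, Suc i]"
    using st_braid[of i] by (simp add: permword_def comp_assoc)
  show ?case by (simp only: permword_append e)
qed simp_all

lemma braid_equiv_move_far:
  "(\<forall>y\<in>set ys. 1 \<le> y \<and> y < N \<and> (c + 2 \<le> y \<or> y + 2 \<le> c)) \<Longrightarrow> 1 \<le> c \<Longrightarrow> c < N \<Longrightarrow>
   braid_equiv N (c # ys) (ys @ [c])"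
proof (induction ys)
  case Nil then show ?case by (simp add: braid_equiv.refl_word)
next
  case (Cons y ys)
  have "braid_equiv N (c # y # ys) (y # c # ys)"
  proof -
    have y: "1 \<le> y" "y < N" "c + 2 \<le> y \<or> y + 2 \<le> c" using Cons.prems by auto
    show ?thesis
    proof (cases "c + 2 \<le> y")
      case True
      then show ?thesis using braid_equiv.far_commute[where i=c and j=y and p="[]" and q=ys] y Cons.prems by simp
    next
      case False
      then have "y + 2 \<le> c" using y by simp
      then show ?thesis using braid_equiv.sym_word[OF braid_equiv.far_commute[where i=y and j=c and p="[]" and q=ys]] y Cons.prems by simp
    qed
  qed
  moreover have "braid_equiv N (y # c # ys) (y # ys @ [c])"
    using Cons by (intro braid_equiv_Cons) simp
  ultimately show ?case by (simp add: braid_equiv.trans_word)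
qed

lemma braid_equiv_past_block:
  assumes "1 \<le> t" "t < c" "c \<le> k" "k < N"
  shows "braid_equiv N (c # [t..<Suc k]) ([t..<Suc k] @ [c - 1])"
proof -
  define A where "A = [t..<c - 1]"
  define C where "C = [Suc c..<Suc k]"
  have dec: "[t..<Suc k] = A @ [c - 1, c] @ C"
  proof -
    have "[t..<Suc k] = [t..<c - 1] @ [c - 1..<Suc k]"
      using upt_add_eq_append[of t "c - 1" "Suc k - (c - 1)"] assms by simp
    moreover have "[c - 1..<Suc k] = [c - 1, c] @ C" unfolding C_def using assms
      by (simp add: upt_conv_Cons)
    ultimately show ?thesis unfolding A_def by simp
  qed
  have s1: "braid_equiv N (c # A) (A @ [c])"
    using assms unfolding A_def by (intro braid_equiv_move_far) auto
  have e1: "braid_equiv N (c # A @ [c - 1, c] @ C) (A @ [c, c - 1, c] @ C)"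
    using braid_equiv_append_right[OF s1, of "[c - 1, c] @ C"] by simp
  have e2: "braid_equiv N (A @ [c, c - 1, c] @ C) (A @ [c - 1, c, c - 1] @ C)"
    using braid_equiv.sym_word[OF braid_equiv.braid_move[where i="c - 1" and p=A and q=C]] assms by simp
  have "braid_equiv N ((c - 1) # C) (C @ [c - 1])"
    using assms unfolding C_def by (intro braid_equiv_move_far) auto
  then have e3: "braid_equiv N (A @ [c - 1, c, c - 1] @ C) (A @ [c - 1, c] @ C @ [c - 1])"
    using braid_equiv_append_left[of N "(c - 1) # C" "C @ [c - 1]" "A @ [c - 1, c]"] by simp
  have "braid_equiv N (c # A @ [c - 1, c] @ C) (A @ [c - 1, c] @ C @ [c - 1])"
    by (rule braid_equiv.trans_word[OF braid_equiv.trans_word[OF e1 e2] e3])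
  then show ?thesis using dec by simp
qed

text \<open>\<open>bubble_insert N k ts c ts'\<close>: the bubble normal form \<open>ts'\<close> of \<open>s\<^sub>c\<close> times the bubble word
  of \<open>ts\<close> on the letters \<open>1..k\<close>. Either \<open>s\<^sub>c\<close> is absorbed by braid moves into a word one
  letter longer, or it cancels a letter and the word gets one letter shorter.\<close>

definition bubble_insert :: "nat \<Rightarrow> nat \<Rightarrow> (nat \<Rightarrow> nat) \<Rightarrow> nat \<Rightarrow> (nat \<Rightarrow> nat) \<Rightarrow> bool" where
  "bubble_insert N k ts c ts' \<longleftrightarrow>
     (\<forall>j. (k < j \<or> j = 0) \<longrightarrow> ts' j = ts j) \<and> (\<forall>j. 1 \<le> j \<longrightarrow> j \<le> k \<longrightarrow> ts' j \<le> j) \<and>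
     ((braid_equiv N (c # bubble_word (Suc k) ts) (bubble_word (Suc k) ts')
         \<and> length (bubble_word (Suc k) ts') = Suc (length (bubble_word (Suc k) ts)))
      \<or> (permword (c # bubble_word (Suc k) ts) = permword (bubble_word (Suc k) ts')
         \<and> Suc (length (bubble_word (Suc k) ts')) = length (bubble_word (Suc k) ts)))"

lemma bubble_insert_pass:
  assumes pass: "braid_equiv N (c # bubble_block ts (Suc k)) (bubble_block ts (Suc k) @ [c'])"
    and ins: "bubble_insert N k ts c' ts'"
    and le: "ts (Suc k) \<le> Suc k"
  shows "bubble_insert N (Suc k) ts c ts'"
proof -
  define K where "K = Suc k"
  define R where "R = bubble_word K ts"
  have same: "ts' j = ts j" if "k < j \<or> j = 0" for j using ins that unfolding bubble_insert_def by blast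
  have block: "bubble_block ts' K = bubble_block ts K"
    using same[of K] by (simp add: bubble_block_def K_def)
  have split: "bubble_word (Suc K) ts'' = bubble_block ts'' K @ bubble_word K ts''" for ts''
    by (simp add: bubble_word_Suc K_def)
  have bounds: "\<forall>j. 1 \<le> j \<longrightarrow> j \<le> K \<longrightarrow> ts' j \<le> j"
    using ins same[of K] le unfolding bubble_insert_def K_def by (auto simp: le_Suc_eq)
  have e1: "braid_equiv N (c # bubble_block ts K @ R) (bubble_block ts K @ c' # R)"
    using braid_equiv_append_right[OF pass, of R] by (simp add: K_def)
  have "(braid_equiv N (c' # R) (bubble_word K ts') \<and> length (bubble_word K ts') = Suc (length R)) \<or>
        (permword (c' # R) = permword (bubble_word K ts') \<and> Suc (length (bubble_word K ts')) = length R)"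
    using ins unfolding bubble_insert_def R_def K_def by blast
  then have "(braid_equiv N (c # bubble_word (Suc K) ts) (bubble_word (Suc K) ts')
              \<and> length (bubble_word (Suc K) ts') = Suc (length (bubble_word (Suc K) ts)))
           \<or> (permword (c # bubble_word (Suc K) ts) = permword (bubble_word (Suc K) ts')
              \<and> Suc (length (bubble_word (Suc K) ts')) = length (bubble_word (Suc K) ts))"
  proof
    assume "braid_equiv N (c' # R) (bubble_word K ts') \<and> length (bubble_word K ts') = Suc (length R)"
    moreover from this have "braid_equiv N (c # bubble_block ts K @ R) (bubble_block ts K @ bubble_word K ts')"
      using e1 braid_equiv_append_left braid_equiv.trans_word by blast
    ultimately show ?thesis by (simp add: split block R_def)
  next
    assume *: "permword (c' # R) = permword (bubble_word K ts') \<and> Suc (length (bubble_word K ts')) = length R"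
    have "permword (c # bubble_block ts K @ R) = permword (bubble_block ts K @ c' # R)"
      using braid_equiv_permword[OF e1] by simp
    also have "\<dots> = permword (bubble_block ts K @ bubble_word K ts')" using * by (simp add: permword_append)
    finally show ?thesis using * by (simp add: split block R_def)
  qed
  then show ?thesis using same bounds unfolding bubble_insert_def K_def by auto
qed

lemma bubble_insert_extend:
  assumes le: "\<forall>j. 1 \<le> j \<longrightarrow> j \<le> K \<longrightarrow> ts j \<le> j" and c: "1 \<le> c" "c \<le> K"
    and top: "(ts K = 0 \<and> c = K) \<or> ts K = Suc c"
  shows "bubble_insert N K ts c (ts(K := c))"
proof -
  have "bubble_block (ts(K := c)) K = c # bubble_block ts K"
    using top c by (auto simp: bubble_block_def upt_conv_Cons)
  moreover have "bubble_word K (ts(K := c)) = bubble_word K ts" by (rule bubble_word_cong) auto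
  ultimately have "bubble_word (Suc K) (ts(K := c)) = c # bubble_word (Suc K) ts"
    using c by (simp add: bubble_word_Suc)
  then show ?thesis unfolding bubble_insert_def using le c by (auto simp: braid_equiv.refl_word)
qed

lemma bubble_insert_cancel:
  assumes le: "\<forall>j. 1 \<le> j \<longrightarrow> j \<le> K \<longrightarrow> ts j \<le> j" and c: "1 \<le> c" "c \<le> K" and top: "ts K = c"
  shows "bubble_insert N K ts c (ts(K := if c = K then 0 else Suc c))"
proof -
  define ts' where "ts' = ts(K := if c = K then 0 else Suc c)"
  note cK = c(2)
  have b': "bubble_block ts' K = [Suc c..<Suc K]" by (simp add: ts'_def bubble_block_def)
  have b: "bubble_block ts K = c # [Suc c..<Suc K]" using top c cK by (simp add: bubble_block_def upt_conv_Cons)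
  have w: "bubble_word K ts' = bubble_word K ts" unfolding ts'_def by (rule bubble_word_cong) auto
  have "permword (c # bubble_word (Suc K) ts) = permword (bubble_word (Suc K) ts')"
    using c cK by (simp add: bubble_word_Suc b b' w permword_Cons permword_append comp_assoc st_st_id)
  moreover have "Suc (length (bubble_word (Suc K) ts')) = length (bubble_word (Suc K) ts)"
    using c cK by (simp add: bubble_word_Suc b b' w)
  ultimately show ?thesis
    unfolding bubble_insert_def ts'_def[symmetric] using le c cK by (auto simp: ts'_def)
qed

lemma ex_bubble_insert:
  "k < N \<Longrightarrow> (\<forall>j. 1 \<le> j \<longrightarrow> j \<le> k \<longrightarrow> ts j \<le> j) \<Longrightarrow> 1 \<le> c \<Longrightarrow> c \<le> k \<Longrightarrow>
   \<exists>ts'. bubble_insert N k ts c ts'"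
proof (induction k arbitrary: ts c)
  case (Suc k)
  define K where "K = Suc k"
  have le: "\<forall>j. 1 \<le> j \<longrightarrow> j \<le> K \<longrightarrow> ts j \<le> j" using Suc.prems(2) unfolding K_def .
  have tsK: "ts K \<le> K" using le by (simp add: K_def)
  have pass: "\<exists>ts'. bubble_insert N K ts c ts'"
    if "braid_equiv N (c # bubble_block ts K) (bubble_block ts K @ [c'])" "1 \<le> c'" "c' \<le> k" for c'
    using Suc.IH[of ts c'] Suc.prems that bubble_insert_pass[of N c ts k c'] tsK
    unfolding K_def by fastforce
  have c: "1 \<le> c" "c \<le> K" using Suc.prems(3,4) unfolding K_def .
  have KN: "K < N" using Suc.prems(1) unfolding K_def .
  have "\<exists>ts'. bubble_insert N K ts c ts'"
  proof (cases "ts K = 0")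
    case True
    then have "bubble_block ts K = []" by (simp add: bubble_block_def)
    then show ?thesis
      using bubble_insert_extend[OF le c] pass[of c] True c by (cases "c = K") (auto simp: braid_equiv.refl_word K_def)
  next
    case False
    define t where "t = ts K"
    have t: "1 \<le> t" "t \<le> K" using False tsK unfolding t_def by auto
    have blk: "bubble_block ts K = [t..<Suc K]" using False by (simp add: bubble_block_def t_def)
    consider "c + 2 \<le> t" | "Suc c = t" | "c = t" | "t < c" by linarith
    then show ?thesis
    proof cases
      case 1
      then have "braid_equiv N (c # bubble_block ts K) (bubble_block ts K @ [c])"
        unfolding blk using t KN c by (intro braid_equiv_move_far) auto
      then show ?thesis using pass 1 t c unfolding K_def by simp
    next
      case 2
      then show ?thesis by (intro exI[of _ "ts(K := c)"] bubble_insert_extend[OF le c]) (simp add: t_def)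
    next
      case 3
      then have "ts K = c" by (simp add: t_def)
      then show ?thesis using bubble_insert_cancel[OF le c] by blast
    next
      case 4
      then have "braid_equiv N (c # bubble_block ts K) (bubble_block ts K @ [c - 1])"
        unfolding blk using t KN c by (intro braid_equiv_past_block) auto
      then show ?thesis using pass 4 t c unfolding K_def by simp
    qed
  qed
  then show ?case unfolding K_def .
qed simp

lemma valid_ts_bubble_insert:
  assumes "valid_ts (Suc k) ts" "bubble_insert N k ts c ts'"
  shows "valid_ts (Suc k) ts'"
  unfolding valid_ts_def
proof (intro allI impI)
  fix j assume "ts' j \<noteq> 0"
  then show "1 \<le> j \<and> j < Suc k \<and> ts' j \<le> j"
    using assms unfolding valid_ts_def bubble_insert_def by (cases "k < j \<or> j = 0") auto
qed

lemma bubble_normal_form: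
  "set w \<subseteq> {1..<n} \<Longrightarrow> \<exists>ts. valid_ts n ts \<and> permword w = permword (bubble_word n ts) \<and>
     length (bubble_word n ts) \<le> length w \<and>
     (length (bubble_word n ts) = length w \<longrightarrow> braid_equiv n w (bubble_word n ts))"
proof (induction w)
  case Nil
  show ?case by (rule exI[of _ "\<lambda>_. 0"]) (simp add: valid_ts_def bubble_word_zero braid_equiv.refl_word)
next
  case (Cons i w)
  then obtain ts0 where h: "valid_ts n ts0" "permword w = permword (bubble_word n ts0)"
    "length (bubble_word n ts0) \<le> length w"
    "length (bubble_word n ts0) = length w \<longrightarrow> braid_equiv n w (bubble_word n ts0)" by auto
  have i: "1 \<le> i" "i < n" using Cons.prems by auto
  then obtain m where n: "n = Suc m" by (cases n) auto
  obtain ts' where ins: "bubble_insert n m ts0 i ts'"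
    using ex_bubble_insert[of m n ts0 i] valid_ts_le[OF h(1)] i n by auto
  then have disj: "(braid_equiv n (i # bubble_word n ts0) (bubble_word n ts')
                    \<and> length (bubble_word n ts') = Suc (length (bubble_word n ts0)))
                 \<or> (permword (i # bubble_word n ts0) = permword (bubble_word n ts')
                    \<and> Suc (length (bubble_word n ts')) = length (bubble_word n ts0))"
    unfolding bubble_insert_def n by blast
  have "valid_ts n ts'" using valid_ts_bubble_insert h(1) ins unfolding n by blast
  moreover have "permword (i # w) = permword (i # bubble_word n ts0)" by (simp add: permword_Cons h(2))
  then have "permword (i # w) = permword (bubble_word n ts')" using disj braid_equiv_permword by auto
  moreover have "braid_equiv n (i # w) (bubble_word n ts')" if "length (bubble_word n ts') = length (i # w)"
    using disj h(3,4) that braid_equiv_Cons braid_equiv.trans_word by fastforce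
  ultimately show ?case using disj h(3) by (intro exI[of _ ts']) auto
qed

lemma ex_reduced_word:
  assumes "s permutes {1..n}"
  shows "\<exists>w. reduced_word n s w"
proof -
  obtain ts where ts: "valid_ts n ts" "bubble n ts = s" using ex_bubble[OF assms] by blast
  let ?P = "\<lambda>w. set w \<subseteq> {1..<n} \<and> permword w = s"
  have "?P (bubble_word n ts)" using ts set_bubble_word permword_bubble_word by auto
  then obtain w where "?P w" "\<forall>v. ?P v \<longrightarrow> length w \<le> length v"
    using ex_has_least_nat[of ?P "bubble_word n ts" length] by blast
  then show ?thesis unfolding reduced_word_def by blast
qed

text \<open>The normal form of a reduced word cannot be shorter than it, so \<open>bubble_normal_form\<close> makes
  the two braid equivalent: Matsumoto's theorem for this particular pair of reduced words.\<close>

lemma reduced_word_braid_equiv: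
  assumes "s permutes {1..n}" "reduced_word n s w"
  shows "braid_equiv n w (bubble_word n (tk n s))"
proof -
  have w: "set w \<subseteq> {1..<n}" "permword w = s" using assms(2) unfolding reduced_word_def by auto
  obtain ts where ts: "valid_ts n ts" "permword w = permword (bubble_word n ts)"
    "length (bubble_word n ts) \<le> length w" "length (bubble_word n ts) = length w \<longrightarrow> braid_equiv n w (bubble_word n ts)"
    using bubble_normal_form[OF w(1)] by blast
  have bs: "bubble n ts = s" using ts(2) w(2) permword_bubble_word by simp
  have "length w \<le> length (bubble_word n ts)" using assms(2) unfolding reduced_word_def
    using set_bubble_word[OF ts(1)] bs permword_bubble_word by auto
  then have "braid_equiv n w (bubble_word n ts)" using ts(3,4) by simp
  moreover have "tk n s = ts" using tk_bubble[OF ts(1)] bs by simp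
  ultimately show ?thesis by simp
qed

section \<open>Linear algebra of finitely supported vectors\<close>

definition fsupp :: "('a \<Rightarrow> 'k::zero) \<Rightarrow> bool" where
  "fsupp X \<longleftrightarrow> finite {w. X w \<noteq> 0}"

definition rowfin :: "('a \<Rightarrow> 'c \<Rightarrow> 'k::zero) \<Rightarrow> bool" where
  "rowfin f \<longleftrightarrow> (\<forall>w. finite {v. f w v \<noteq> 0})"

lemma lin_ext_eq_sum:
  fixes X :: "'a \<Rightarrow> 'k::field"
  assumes "finite S" "{w. X w \<noteq> 0} \<subseteq> S"
  shows "lin_ext f X v = (\<Sum>w\<in>S. X w * f w v)"
  unfolding lin_ext_def by (rule sum.mono_neutral_left) (use assms in auto)

lemma lin_ext_nonzeroD:
  fixes X :: "'a \<Rightarrow> 'k::field"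
  assumes "lin_ext f X v \<noteq> 0"
  shows "\<exists>w. X w \<noteq> 0 \<and> f w v \<noteq> 0"
proof -
  obtain w where "w \<in> {w. X w \<noteq> 0}" "X w * f w v \<noteq> 0"
    using assms unfolding lin_ext_def by (rule sum.not_neutral_contains_not_neutral)
  then show ?thesis by auto
qed

lemma lin_ext_support:
  fixes X :: "'a \<Rightarrow> 'k::field"
  shows "{v. lin_ext f X v \<noteq> 0} \<subseteq> (\<Union>w\<in>{w. X w \<noteq> 0}. {v. f w v \<noteq> 0})"
  by (auto dest: lin_ext_nonzeroD)

lemma finite_lin_ext_support:
  "rowfin f \<Longrightarrow> fsupp X \<Longrightarrow> finite (\<Union>w\<in>{w. X w \<noteq> 0}. {v. f w v \<noteq> 0})"
  unfolding rowfin_def fsupp_def by blast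

lemma lin_ext_fsupp:
  fixes X :: "'a \<Rightarrow> 'k::field"
  shows "rowfin f \<Longrightarrow> fsupp X \<Longrightarrow> fsupp (lin_ext f X)"
  using lin_ext_support finite_lin_ext_support unfolding fsupp_def by (metis finite_subset)

lemma fsupp_delta_vec: "fsupp (delta_vec w :: 'a \<Rightarrow> 'k::field)"
  unfolding fsupp_def delta_vec_def by simp

lemma lin_ext_single_support:
  fixes X :: "'a \<Rightarrow> 'k::field"
  assumes "fsupp X" and "\<And>u. u \<noteq> z \<Longrightarrow> X u * f u v = 0"
  shows "lin_ext f X v = X z * f z v"
proof -
  have "lin_ext f X v = (\<Sum>w\<in>insert z {w. X w \<noteq> 0}. X w * f w v)"
    using assms(1) unfolding fsupp_def by (intro lin_ext_eq_sum) auto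
  also have "\<dots> = X z * f z v + (\<Sum>w\<in>{w. X w \<noteq> 0} - {z}. X w * f w v)"
    using assms(1) unfolding fsupp_def by (simp add: sum.insert_remove)
  also have "(\<Sum>w\<in>{w. X w \<noteq> 0} - {z}. X w * f w v) = 0"
    using assms(2) by (intro sum.neutral) auto
  finally show ?thesis by simp
qed

lemma lin_ext_delta:
  "lin_ext f (delta_vec w :: 'a \<Rightarrow> 'k::field) = f w"
proof
  fix v show "lin_ext f (delta_vec w) v = f w v"
    by (subst lin_ext_single_support[OF fsupp_delta_vec, where z=w]) (simp_all add: delta_vec_def)
qed

lemma lin_ext_delta_vec:
  fixes X :: "'a \<Rightarrow> 'k::field"
  assumes "fsupp X"
  shows "lin_ext delta_vec X = X"
proof
  fix v show "lin_ext delta_vec X v = X v"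
    by (subst lin_ext_single_support[OF assms, where z=v]) (simp_all add: delta_vec_def)
qed

lemma lin_ext_zero: "lin_ext f (\<lambda>_. 0 :: 'k::field) = (\<lambda>_. 0)"
  unfolding lin_ext_def by simp

lemma lin_ext_cong:
  "(\<And>w. X w \<noteq> 0 \<Longrightarrow> f w = g w) \<Longrightarrow> lin_ext f X = lin_ext g X"
  unfolding lin_ext_def by (intro ext sum.cong) auto

lemma lin_ext_comp:
  fixes X :: "'a \<Rightarrow> 'k::field"
  assumes X: "fsupp X" and f: "rowfin f"
  shows "lin_ext g (lin_ext f X) = lin_ext (\<lambda>w. lin_ext g (f w)) X"
proof
  fix v
  define S where "S = {w. X w \<noteq> 0}"
  define U where "U = (\<Union>w\<in>S. {u. f w u \<noteq> 0})"
  have fS: "finite S" using X unfolding S_def fsupp_def .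
  have fU: "finite U" using finite_lin_ext_support[OF f X] unfolding U_def S_def .
  have "lin_ext g (lin_ext f X) v = (\<Sum>u\<in>U. lin_ext f X u * g u v)"
    using lin_ext_support unfolding U_def S_def by (intro lin_ext_eq_sum[OF fU[unfolded U_def S_def]])
  also have "\<dots> = (\<Sum>u\<in>U. \<Sum>w\<in>S. X w * (f w u * g u v))"
    by (simp add: lin_ext_def S_def sum_distrib_right mult.assoc)
  also have "\<dots> = (\<Sum>w\<in>S. X w * (\<Sum>u\<in>U. f w u * g u v))"
    by (subst sum.swap) (simp add: sum_distrib_left)
  also have "\<dots> = (\<Sum>w\<in>S. X w * lin_ext g (f w) v)"
    using fU unfolding U_def by (intro sum.cong refl arg_cong2[where f=times] lin_ext_eq_sum[symmetric]) auto
  also have "\<dots> = lin_ext (\<lambda>w. lin_ext g (f w)) X v"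
    by (simp add: lin_ext_def S_def)
  finally show "lin_ext g (lin_ext f X) v = lin_ext (\<lambda>w. lin_ext g (f w)) X v" .
qed

section \<open>Operators acting on two adjacent tensor factors\<close>

lemma pos_coef_nonzeroD:
  "pos_coef i c w u \<noteq> 0 \<Longrightarrow> 1 \<le> i \<and> i < length w \<and> length u = length w \<and>
     (\<forall>j<length w. j \<noteq> i - 1 \<and> j \<noteq> i \<longrightarrow> u ! j = w ! j) \<and> c (w ! (i - 1), w ! i) (u ! (i - 1), u ! i) \<noteq> 0"
  unfolding pos_coef_def by (auto split: if_splits)

lemma pos_coef_eq_update:
  "pos_coef i c w u =
     (if 1 \<le> i \<and> i < length w \<and> u = w[i - 1 := u ! (i - 1), i := u ! i]
      then c (w ! (i - 1), w ! i) (u ! (i - 1), u ! i) else 0)"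
proof -
  have "(length u = length w \<and> (\<forall>j<length w. j \<noteq> i - 1 \<and> j \<noteq> i \<longrightarrow> u ! j = w ! j))
        \<longleftrightarrow> u = w[i - 1 := u ! (i - 1), i := u ! i]" if "1 \<le> i" "i < length w"
    using that by (auto simp: list_eq_iff_nth_eq nth_list_update)
  then show ?thesis unfolding pos_coef_def by auto
qed

lemma rowfin_pos_coef:
  assumes "rowfin c"
  shows "rowfin (pos_coef i c)"
  unfolding rowfin_def
proof
  fix w
  have "{u. pos_coef i c w u \<noteq> 0} \<subseteq>
      (\<lambda>q. w[i - 1 := fst q, i := snd q]) ` {q. c (w ! (i - 1), w ! i) q \<noteq> 0}"
    by (auto simp: pos_coef_eq_update image_iff split: if_splits; metis)
  moreover have "finite {q. c (w ! (i - 1), w ! i) q \<noteq> 0}" using assms unfolding rowfin_def by blast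
  ultimately show "finite {u. pos_coef i c w u \<noteq> 0}" by (rule finite_subset[OF _ finite_imageI])
qed

lemma act_word_Nil[simp]: "act_word c cx [] X = X"
  by (simp add: act_word_def)

lemma act_word_Cons[simp]: "act_word c cx (g # ws) X = lin_ext (gen_coef c cx g) (act_word c cx ws X)"
  by (simp add: act_word_def)

lemma act_word_append: "act_word c cx (a @ b) X = act_word c cx a (act_word c cx b X)"
  by (simp add: act_word_def)

lemma rowfin_gen_coef: "rowfin c \<Longrightarrow> rowfin cx \<Longrightarrow> rowfin (gen_coef c cx g)"
  by (cases g) (simp_all add: rowfin_pos_coef)

lemma fsupp_act_word:
  fixes X :: "'a list \<Rightarrow> 'k::field"
  shows "rowfin c \<Longrightarrow> rowfin cx \<Longrightarrow> fsupp X \<Longrightarrow> fsupp (act_word c cx ws X)"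
  by (induction ws) (simp_all add: lin_ext_fsupp rowfin_gen_coef)

lemma act_word_eq_lin_ext:
  fixes X :: "'a list \<Rightarrow> 'k::field"
  assumes c: "rowfin c" "rowfin cx" and X: "fsupp X"
  shows "act_word c cx ws X = lin_ext (\<lambda>w. act_word c cx ws (delta_vec w)) X"
proof (induction ws)
  case Nil then show ?case using lin_ext_delta_vec[OF X] by simp
next
  case (Cons g ws)
  have rf: "rowfin (\<lambda>w. act_word c cx ws (delta_vec w :: 'a list \<Rightarrow> 'k))"
    using fsupp_act_word[OF c fsupp_delta_vec] unfolding rowfin_def fsupp_def by blast
  have "act_word c cx (g # ws) X = lin_ext (gen_coef c cx g) (lin_ext (\<lambda>w. act_word c cx ws (delta_vec w)) X)"
    by (simp add: Cons.IH)
  also have "\<dots> = lin_ext (\<lambda>w. lin_ext (gen_coef c cx g) (act_word c cx ws (delta_vec w))) X"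
    by (rule lin_ext_comp[OF X rf])
  finally show ?case by simp
qed

lemma act_word_eq_on_basis:
  fixes X :: "'a list \<Rightarrow> 'k::field"
  assumes "rowfin c" "rowfin cx" "fsupp X"
    and "\<And>w. X w \<noteq> 0 \<Longrightarrow> act_word c cx ws1 (delta_vec w) = act_word c cx ws2 (delta_vec w)"
  shows "act_word c cx ws1 X = act_word c cx ws2 X"
  using assms by (simp add: act_word_eq_lin_ext[OF assms(1-3)] cong: lin_ext_cong)

lemma gen_coef_nonzero_length: "gen_coef c cx g w u \<noteq> 0 \<Longrightarrow> length u = length w"
  by (cases g) (auto dest: pos_coef_nonzeroD)

lemma act_word_nonzero_length:
  fixes X :: "'a list \<Rightarrow> 'k::field"
  shows "(\<And>u. X u \<noteq> 0 \<Longrightarrow> length u = N) \<Longrightarrow> act_word c cx ws X v \<noteq> 0 \<Longrightarrow> length v = N"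
proof (induction ws arbitrary: v)
  case (Cons g ws)
  then obtain w where "act_word c cx ws X w \<noteq> 0" "gen_coef c cx g w v \<noteq> 0"
    using lin_ext_nonzeroD[of "gen_coef c cx g" "act_word c cx ws X" v] by auto
  then show ?case using Cons gen_coef_nonzero_length by metis
qed simp

lemma act_word_append_cong:
  fixes X :: "'a list \<Rightarrow> 'k::field"
  assumes c: "rowfin c" "rowfin cx" and X: "fsupp X" "\<And>w. X w \<noteq> 0 \<Longrightarrow> length w = N"
    and eq: "\<And>w. length w = N \<Longrightarrow> act_word c cx ws1 (delta_vec w) = act_word c cx ws2 (delta_vec w)"
  shows "act_word c cx (p @ ws1 @ q) X = act_word c cx (p @ ws2 @ q) X"
proof -
  have "act_word c cx ws1 (act_word c cx q X) = act_word c cx ws2 (act_word c cx q X)"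
    by (rule act_word_eq_on_basis[OF c fsupp_act_word[OF c X(1)]])
       (use eq act_word_nonzero_length[OF X(2)] in blast)
  then show ?thesis by (simp add: act_word_append)
qed

lemma lin_ext_pos_coef_far:
  fixes c1 c2 :: "'a \<times> 'a \<Rightarrow> 'a \<times> 'a \<Rightarrow> 'k::field"
  assumes "rowfin c2" "1 \<le> i" "i + 2 \<le> j \<or> j + 2 \<le> i"
  shows "lin_ext (pos_coef i c1) (pos_coef j c2 w) v
       = pos_coef j c2 w (w[j - 1 := v ! (j - 1), j := v ! j])
         * pos_coef i c1 (w[j - 1 := v ! (j - 1), j := v ! j]) v"
proof (rule lin_ext_single_support)
  show "fsupp (pos_coef j c2 w)" using rowfin_pos_coef[OF assms(1)] by (simp add: rowfin_def fsupp_def)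
  fix u assume ne: "u \<noteq> w[j - 1 := v ! (j - 1), j := v ! j]"
  show "pos_coef j c2 w u * pos_coef i c1 u v = 0"
  proof (rule ccontr)
    assume "pos_coef j c2 w u * pos_coef i c1 u v \<noteq> 0"
    then have u: "u = w[j - 1 := u ! (j - 1), j := u ! j]" and v: "v = u[i - 1 := v ! (i - 1), i := v ! i]"
      by (auto simp: pos_coef_eq_update split: if_splits)
    have "v ! k = u ! k" if "k \<noteq> i - 1" "k \<noteq> i" for k
      using arg_cong[where f="\<lambda>l. l ! k", OF v] that by (simp add: nth_list_update)
    then have "v ! (j - 1) = u ! (j - 1)" "v ! j = u ! j" using assms(2,3) by auto
    then show False using ne u by simp
  qed
qed

lemma pos_coef_far_commute:
  fixes c1 c2 :: "'a \<times> 'a \<Rightarrow> 'a \<times> 'a \<Rightarrow> 'k::field"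
  assumes "rowfin c1" "rowfin c2" "1 \<le> i" "i + 2 \<le> j"
  shows "lin_ext (pos_coef i c1) (pos_coef j c2 w) = lin_ext (pos_coef j c2) (pos_coef i c1 w)"
proof
  fix v
  have L: "lin_ext (pos_coef i c1) (pos_coef j c2 w) v
      = pos_coef j c2 w (w[j - 1 := v ! (j - 1), j := v ! j])
        * pos_coef i c1 (w[j - 1 := v ! (j - 1), j := v ! j]) v"
    by (rule lin_ext_pos_coef_far) (use assms in auto)
  have R: "lin_ext (pos_coef j c2) (pos_coef i c1 w) v
      = pos_coef i c1 w (w[i - 1 := v ! (i - 1), i := v ! i])
        * pos_coef j c2 (w[i - 1 := v ! (i - 1), i := v ! i]) v"
    by (rule lin_ext_pos_coef_far) (use assms in auto)
  show "lin_ext (pos_coef i c1) (pos_coef j c2 w) v = lin_ext (pos_coef j c2) (pos_coef i c1 w) v"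
  proof (cases "j < length w")
    case True
    have "w[j - 1 := a, j := b, i - 1 := c, i := d] = w[i - 1 := c, i := d, j - 1 := a, j := b]" for a b c d
      using assms(3,4) True by (intro nth_equalityI) (auto simp: nth_list_update)
    then show ?thesis unfolding L R using assms(3,4) True by (simp add: pos_coef_eq_update mult.commute)
  next
    case False
    then show ?thesis unfolding L R by (simp add: pos_coef_eq_update)
  qed
qed

text \<open>\<open>embed a b Y\<close> is the tensor \<open>a \<otimes> Y \<otimes> b\<close> for \<open>Y\<close> supported on words of length 3; it reduces
  the braid relation on \<open>\<widehat>V\<^sup>\<otimes>\<^sup>n\<close> to the defining one on \<open>\<widehat>V\<^sup>\<otimes>\<^sup>3\<close>.\<close>

definition embed :: "'a list \<Rightarrow> 'a list \<Rightarrow> ('a list \<Rightarrow> 'k::zero) \<Rightarrow> 'a list \<Rightarrow> 'k" where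
  "embed a b Y u =
     (if length u = length a + 3 + length b \<and> take (length a) u = a \<and> drop (length a + 3) u = b
      then Y (take 3 (drop (length a) u)) else 0)"

lemma embed_append: "length t = 3 \<Longrightarrow> embed a b Y (a @ t @ b) = Y t"
  by (simp add: embed_def)

lemma embed_nonzeroD:
  "embed a b Y u \<noteq> 0 \<Longrightarrow> u = a @ take 3 (drop (length a) u) @ b \<and> Y (take 3 (drop (length a) u)) \<noteq> 0"
  unfolding embed_def by (metis append_take_drop_id drop_drop add.commute)

lemma delta_vec_append3:
  assumes "length t = 3"
  shows "(delta_vec (a @ t @ b) :: 'a list \<Rightarrow> 'k::field) = embed a b (delta_vec t)"
proof
  fix u
  show "(delta_vec (a @ t @ b) :: 'a list \<Rightarrow> 'k) u = embed a b (delta_vec t) u"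
  proof (cases "u = a @ t @ b")
    case True then show ?thesis using assms by (simp add: embed_append delta_vec_def)
  next
    case False
    have "embed a b (delta_vec t :: 'a list \<Rightarrow> 'k) u = 0"
    proof (rule ccontr)
      assume "embed a b (delta_vec t :: 'a list \<Rightarrow> 'k) u \<noteq> 0"
      from embed_nonzeroD[OF this] show False using False by (auto simp: delta_vec_def split: if_splits)
    qed
    then show ?thesis using False by (simp add: delta_vec_def)
  qed
qed

lemma pos_coef_append3:
  assumes t: "length t = 3" and d: "d = 1 \<or> d = 2"
  shows "pos_coef (length a + d) c (a @ t @ b) u = embed a b (pos_coef d c t) u"
proof (cases "length u = length a + 3 + length b")
  case False
  then show ?thesis using t by (simp add: pos_coef_def embed_def)
next
  case True
  define m where "m = take 3 (drop (length a) u)"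
  define t' where "t' = t[d - 1 := m ! (d - 1), d := m ! d]"
  have u: "u = take (length a) u @ m @ drop (length a + 3) u" unfolding m_def
    by (metis append_take_drop_id drop_drop add.commute)
  have lm: "length m = 3" using True unfolding m_def by simp
  have ix: "length a + d - 1 = length a + (d - 1)" using d by auto
  have nth: "u ! (length a + d - 1) = m ! (d - 1)" "u ! (length a + d) = m ! d"
    "(a @ t @ b) ! (length a + d - 1) = t ! (d - 1)" "(a @ t @ b) ! (length a + d) = t ! d"
    using d True t unfolding ix m_def by (auto simp: nth_append)
  have upd: "(a @ t @ b)[length a + d - 1 := m ! (d - 1), length a + d := m ! d] = a @ t' @ b"
    unfolding t'_def ix using d t by (auto simp: list_update_append)
  have split: "u = a @ t' @ b \<longleftrightarrow> take (length a) u = a \<and> m = t' \<and> drop (length a + 3) u = b"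
    using lm t True unfolding t'_def by (subst (1) u) (auto simp: append_eq_append_conv)
  have "pos_coef (length a + d) c (a @ t @ b) u =
        (if u = a @ t' @ b then c (t ! (d - 1), t ! d) (m ! (d - 1), m ! d) else 0)"
    unfolding pos_coef_eq_update[of "length a + d"] nth upd using d t by auto
  also have "\<dots> = embed a b (pos_coef d c t) u"
    unfolding embed_def m_def[symmetric] pos_coef_eq_update[of d] t'_def[symmetric] split
    using True d t by auto
  finally show ?thesis .
qed

lemma lin_ext_pos_coef_embed:
  fixes Y :: "'a list \<Rightarrow> 'k::field"
  assumes Y: "\<And>t. Y t \<noteq> 0 \<Longrightarrow> length t = 3" and d: "d = 1 \<or> d = 2"
  shows "lin_ext (pos_coef (length a + d) c) (embed a b Y) = embed a b (lin_ext (pos_coef d c) Y)"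
proof
  fix u
  have supp: "{w. embed a b Y w \<noteq> 0} = (\<lambda>t. a @ t @ b) ` {t. Y t \<noteq> 0}"
    using Y by (auto simp: embed_append image_iff dest: embed_nonzeroD)
  have inj: "inj_on (\<lambda>t. a @ t @ b) {t. Y t \<noteq> 0}" by (rule inj_onI) simp
  have "lin_ext (pos_coef (length a + d) c) (embed a b Y) u =
      (\<Sum>t\<in>{t. Y t \<noteq> 0}. embed a b Y (a @ t @ b) * pos_coef (length a + d) c (a @ t @ b) u)"
    unfolding lin_ext_def supp by (rule sum.reindex[OF inj, unfolded comp_def])
  also have "\<dots> = (\<Sum>t\<in>{t. Y t \<noteq> 0}. Y t * embed a b (pos_coef d c t) u)"
    by (intro sum.cong refl) (simp add: Y embed_append pos_coef_append3[OF _ d])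
  also have "\<dots> = embed a b (lin_ext (pos_coef d c) Y) u"
  proof (cases "length u = length a + 3 + length b \<and> take (length a) u = a \<and> drop (length a + 3) u = b")
    case False then show ?thesis unfolding embed_def lin_ext_def if_not_P[OF False] by simp
  qed (simp add: embed_def lin_ext_def)
  finally show "lin_ext (pos_coef (length a + d) c) (embed a b Y) u = embed a b (lin_ext (pos_coef d c) Y) u" .
qed

lemma act_word_embed:
  fixes Y :: "'a list \<Rightarrow> 'k::field"
  assumes Y: "\<And>t. Y t \<noteq> 0 \<Longrightarrow> length t = 3"
  shows "set ds \<subseteq> {1, 2} \<Longrightarrow>
    act_word c cx (map (\<lambda>d. Sg (length a + d)) ds) (embed a b Y) = embed a b (act_word c cx (map Sg ds) Y)"
proof (induction ds)
  case (Cons d ds)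
  have "length t = 3" if "act_word c cx (map Sg ds) Y t \<noteq> 0" for t
    by (rule act_word_nonzero_length[OF Y that])
  then show ?case using Cons by (simp add: lin_ext_pos_coef_embed)
qed simp

definition braid_rel :: "('a \<times> 'a \<Rightarrow> 'a \<times> 'a \<Rightarrow> 'k::field) \<Rightarrow> bool" where
  "braid_rel c \<longleftrightarrow> (\<forall>w. length w = 3 \<longrightarrow>
        lin_ext (pos_coef 1 c) (lin_ext (pos_coef 2 c) (lin_ext (pos_coef 1 c) (delta_vec w)))
      = lin_ext (pos_coef 2 c) (lin_ext (pos_coef 1 c) (lin_ext (pos_coef 2 c) (delta_vec w))))"

lemma act_word_braid:
  fixes c :: "'a \<times> 'a \<Rightarrow> 'a \<times> 'a \<Rightarrow> 'k::field"
  assumes B: "braid_rel c" and i: "1 \<le> i" "Suc i < length w"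
  shows "act_word c cx [Sg i, Sg (Suc i), Sg i] (delta_vec w)
       = act_word c cx [Sg (Suc i), Sg i, Sg (Suc i)] (delta_vec w)"
proof -
  define a where "a = take (i - 1) w"
  define t where "t = take 3 (drop (i - 1) w)"
  define b where "b = drop (i + 2) w"
  have "drop (i + 2) w = drop 3 (drop (i - 1) w)" using i by simp
  then have w: "w = a @ t @ b" unfolding a_def t_def b_def by (simp only: append_take_drop_id)
  have t3: "length t = 3" unfolding t_def using i by simp
  have ia: "i = length a + 1" unfolding a_def using i by simp
  have Y: "(delta_vec t :: 'a list \<Rightarrow> 'k) u \<noteq> 0 \<Longrightarrow> length u = 3" for u
    using t3 by (simp add: delta_vec_def split: if_splits)
  have "act_word c cx (map (\<lambda>d. Sg (length a + d)) ds) (delta_vec w) = embed a b (act_word c cx (map Sg ds) (delta_vec t))"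
    if "set ds \<subseteq> {1, 2}" for ds
    unfolding w delta_vec_append3[OF t3] by (rule act_word_embed[OF Y that])
  from this[of "[1, 2, 1]"] this[of "[2, 1, 2]"] show ?thesis
    using B t3 unfolding braid_rel_def ia by (simp add: numeral_2_eq_2)
qed

lemma act_word_braid_equiv:
  fixes c cx :: "'a \<times> 'a \<Rightarrow> 'a \<times> 'a \<Rightarrow> 'k::field"
  assumes c: "rowfin c" "rowfin cx" and B: "braid_rel c"
  shows "braid_equiv N u v \<Longrightarrow> fsupp X \<Longrightarrow> (\<And>w. X w \<noteq> 0 \<Longrightarrow> length w = N) \<Longrightarrow>
         act_word c cx (map Sg u) X = act_word c cx (map Sg v) X"
proof (induction arbitrary: X rule: braid_equiv.induct)
  case (sym_word w v) then show ?case by (simp add: sym_word.IH)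
next
  case (trans_word u v w) then show ?case by simp
next
  case (far_commute i j p q)
  have comm: "lin_ext (pos_coef i c) (pos_coef j c w) = lin_ext (pos_coef j c) (pos_coef i c w)" for w
    using far_commute.hyps by (intro pos_coef_far_commute c) auto
  have "act_word c cx (map Sg p @ [Sg i, Sg j] @ map Sg q) X = act_word c cx (map Sg p @ [Sg j, Sg i] @ map Sg q) X"
    by (rule act_word_append_cong[OF c far_commute.prems]) (simp_all add: lin_ext_delta comm)
  then show ?case by simp
next
  case (braid_move i p q)
  have braid: "act_word c cx [Sg i, Sg (Suc i), Sg i] (delta_vec w)
      = act_word c cx [Sg (Suc i), Sg i, Sg (Suc i)] (delta_vec w)" if "length w = N" for w
    by (rule act_word_braid[OF B]) (use braid_move.hyps that in auto)
  have "act_word c cx (map Sg p @ [Sg i, Sg (Suc i), Sg i] @ map Sg q) X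
      = act_word c cx (map Sg p @ [Sg (Suc i), Sg i, Sg (Suc i)] @ map Sg q) X"
    by (rule act_word_append_cong[OF c braid_move.prems]) (simp_all add: braid del: act_word_Cons)
  then show ?case by simp
qed simp

lemma map_the_Some: "None \<notin> set u \<Longrightarrow> map Some (map the u) = u"
  by (induction u) auto

lemma iota_Some: "iota Y (map Some x) = Y x"
  by (simp add: iota_def comp_def)

lemma iota_None: "None \<in> set u \<Longrightarrow> iota Y u = 0"
  by (simp add: iota_def)

lemma iota_inj: "iota Y1 = iota Y2 \<Longrightarrow> Y1 = Y2"
  by (metis iota_Some ext)

lemma iota_support: "{w. iota Y w \<noteq> 0} = map Some ` {x. Y x \<noteq> 0}"
  by (auto simp: iota_def iota_Some image_iff intro: map_the_Some[symmetric] split: if_splits)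

lemma pos_coef_map_Some: "pos_coef i sig (map Some x) (map Some v) = pos_coef i (sigV sig) x v"
proof (cases "length v = length x")
  case True
  then have "(\<forall>j<length x. j \<noteq> i - 1 \<and> j \<noteq> i \<longrightarrow> map Some v ! j = map Some x ! j) \<longleftrightarrow>
             (\<forall>j<length x. j \<noteq> i - 1 \<and> j \<noteq> i \<longrightarrow> v ! j = x ! j)" by auto
  then show ?thesis using True unfolding pos_coef_def sigV_def by auto
qed (simp add: pos_coef_def)

definition sig_closed :: "('b option \<times> 'b option \<Rightarrow> 'b option \<times> 'b option \<Rightarrow> 'k::zero) \<Rightarrow> bool" where
  "sig_closed sig \<longleftrightarrow> (\<forall>a b c d. sig (Some a, Some b) (c, d) \<noteq> 0 \<longrightarrow> c \<noteq> None \<and> d \<noteq> None)"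

lemma None_notin_set_update2:
  "None \<notin> set xs \<Longrightarrow> x \<noteq> None \<Longrightarrow> y \<noteq> None \<Longrightarrow> None \<notin> set (xs[i := x, j := y])"
  using set_update_subset_insert[of xs i x] set_update_subset_insert[of "xs[i := x]" j y] by blast

lemma pos_coef_None_free:
  assumes H: "sig_closed sig" and nz: "pos_coef i sig w u \<noteq> 0" and w: "None \<notin> set w"
  shows "None \<notin> set u"
proof -
  from nz have u: "u = w[i - 1 := u ! (i - 1), i := u ! i]" and i: "1 \<le> i" "i < length w"
    and c: "sig (w ! (i - 1), w ! i) (u ! (i - 1), u ! i) \<noteq> 0"
    by (auto simp: pos_coef_eq_update split: if_splits)
  have "w ! (i - 1) \<noteq> None" "w ! i \<noteq> None" using w i by (metis nth_mem less_imp_diff_less)+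
  then have "u ! (i - 1) \<noteq> None" "u ! i \<noteq> None" using H c unfolding sig_closed_def by auto
  then show ?thesis using None_notin_set_update2[OF w] u by metis
qed

lemma lin_ext_pos_coef_iota:
  fixes Y :: "'b list \<Rightarrow> 'k::field"
  assumes H: "sig_closed sig"
  shows "lin_ext (pos_coef i sig) (iota Y) = iota (lin_ext (pos_coef i (sigV sig)) Y)"
proof
  fix u
  show "lin_ext (pos_coef i sig) (iota Y) u = iota (lin_ext (pos_coef i (sigV sig)) Y) u"
  proof (cases "None \<in> set u")
    case True
    have "lin_ext (pos_coef i sig) (iota Y) u = 0"
    proof (rule ccontr)
      assume "lin_ext (pos_coef i sig) (iota Y) u \<noteq> 0"
      then obtain w where "iota Y w \<noteq> 0" "pos_coef i sig w u \<noteq> 0" by (blast dest: lin_ext_nonzeroD)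
      then show False using True pos_coef_None_free[OF H] iota_None by blast
    qed
    then show ?thesis using iota_None[OF True] by simp
  next
    case False
    then obtain v where u: "u = map Some v" using map_the_Some by metis
    have inj: "inj_on (map Some) {x. Y x \<noteq> 0}" by (rule inj_onI) (simp add: inj_map_eq_map)
    have "lin_ext (pos_coef i sig) (iota Y) u
        = (\<Sum>x\<in>{x. Y x \<noteq> 0}. iota Y (map Some x) * pos_coef i sig (map Some x) u)"
      unfolding lin_ext_def iota_support by (rule sum.reindex[OF inj, unfolded comp_def])
    also have "\<dots> = iota (lin_ext (pos_coef i (sigV sig)) Y) u"
      unfolding u by (simp add: iota_Some pos_coef_map_Some lin_ext_def)
    finally show ?thesis .
  qed
qed

lemma act_word_iota:
  fixes Y :: "'b list \<Rightarrow> 'k::field"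
  assumes H: "sig_closed sig"
  shows "act_word sig cx (map Sg w) (iota Y) = iota (act_word (sigV sig) cx' (map Sg w) Y)"
  by (induction w) (simp_all add: lin_ext_pos_coef_iota[OF H])

lemma iota_delta: "iota (delta_vec t :: 'b list \<Rightarrow> 'k::field) = delta_vec (map Some t)"
  by (auto simp: fun_eq_iff iota_def delta_vec_def map_the_Some[unfolded map_map])

lemma rowfin_sigV:
  assumes "rowfin sig"
  shows "rowfin (sigV sig)"
  unfolding rowfin_def
proof
  fix p
  have eq: "{q. sigV sig p q \<noteq> 0}
      = (\<lambda>q. (Some (fst q), Some (snd q))) -` {q. sig (Some (fst p), Some (snd p)) q \<noteq> 0}"
    by (auto simp: sigV_def)
  have inj: "inj (\<lambda>q. (Some (fst q), Some (snd q)))" by (rule injI) (auto simp: prod_eq_iff)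
  show "finite {q. sigV sig p q \<noteq> 0}"
    unfolding eq by (rule finite_vimageI[OF _ inj]) (use assms in \<open>simp add: rowfin_def\<close>)
qed

lemma braid_rel_sigV:
  fixes sig :: "'b option \<times> 'b option \<Rightarrow> 'b option \<times> 'b option \<Rightarrow> 'k::field"
  assumes H: "sig_closed sig" and B: "braid_rel sig"
  shows "braid_rel (sigV sig)"
  unfolding braid_rel_def
proof (intro allI impI)
  fix t :: "'b list" assume "length t = 3"
  then have "iota (lin_ext (pos_coef 1 (sigV sig)) (lin_ext (pos_coef 2 (sigV sig))
                (lin_ext (pos_coef 1 (sigV sig)) (delta_vec t))))
           = iota (lin_ext (pos_coef 2 (sigV sig)) (lin_ext (pos_coef 1 (sigV sig))
                (lin_ext (pos_coef 2 (sigV sig)) (delta_vec t))))"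
    using B unfolding braid_rel_def by (simp add: lin_ext_pos_coef_iota[OF H, symmetric] iota_delta)
  then show "lin_ext (pos_coef 1 (sigV sig)) (lin_ext (pos_coef 2 (sigV sig)) (lin_ext (pos_coef 1 (sigV sig)) (delta_vec t)))
           = lin_ext (pos_coef 2 (sigV sig)) (lin_ext (pos_coef 1 (sigV sig)) (lin_ext (pos_coef 2 (sigV sig)) (delta_vec t)))"
    by (rule iota_inj)
qed

section \<open>Words containing a \<open>\<xi>\<close> produce a unit factor\<close>

text \<open>\<open>D\<close> sends unit-supported tensors to lower degree.\<close>

definition unit_supported :: "('b option list \<Rightarrow> 'k::zero) \<Rightarrow> bool" where
  "unit_supported Y \<longleftrightarrow> (\<forall>u. None \<notin> set u \<longrightarrow> Y u = 0)"

definition sig_unital :: "('b option \<times> 'b option \<Rightarrow> 'b option \<times> 'b option \<Rightarrow> 'k::zero_neq_one) \<Rightarrow> bool" where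
  "sig_unital sig \<longleftrightarrow> (\<forall>a. sig (None, a) = delta_vec (a, None) \<and> sig (a, None) = delta_vec (None, a))"

lemma sig_unital_nonzeroD:
  assumes "sig_unital sig" "sig (x, y) (c, d) \<noteq> 0" "c \<noteq> None" "d \<noteq> None"
  shows "x \<noteq> None" "y \<noteq> None"
  using assms unfolding sig_unital_def by (cases x; cases y; auto simp: delta_vec_def split: if_splits)+

lemma unit_supported_pos_coef:
  fixes Y :: "'b option list \<Rightarrow> 'k::field"
  assumes U: "sig_unital sig" and Y: "unit_supported Y"
  shows "unit_supported (lin_ext (pos_coef i sig) Y)"
  unfolding unit_supported_def
proof (intro allI impI)
  fix u :: "'b option list" assume u: "None \<notin> set u"
  show "lin_ext (pos_coef i sig) Y u = 0"
  proof (rule ccontr)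
    assume "lin_ext (pos_coef i sig) Y u \<noteq> 0"
    then obtain w where w: "Y w \<noteq> 0" "pos_coef i sig w u \<noteq> 0" by (blast dest: lin_ext_nonzeroD)
    then have eq: "u = w[i - 1 := u ! (i - 1), i := u ! i]" and i: "1 \<le> i" "i < length w"
      and c: "sig (w ! (i - 1), w ! i) (u ! (i - 1), u ! i) \<noteq> 0"
      by (auto simp: pos_coef_eq_update split: if_splits)
    have "u ! (i - 1) \<noteq> None" "u ! i \<noteq> None"
      using u i eq by (metis length_list_update nth_mem less_imp_diff_less)+
    then have "w ! (i - 1) \<noteq> None" "w ! i \<noteq> None" using sig_unital_nonzeroD[OF U c] by auto
    moreover have "w = u[i - 1 := w ! (i - 1), i := w ! i]"
      using i by (subst eq) (simp add: list_update_swap[of i "i - Suc 0"])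
    ultimately have "None \<notin> set w" using None_notin_set_update2[OF u] by metis
    then show False using Y w(1) unfolding unit_supported_def by blast
  qed
qed

lemma unit_supported_sigma_m:
  fixes Y :: "'b option list \<Rightarrow> 'k::field"
  shows "unit_supported (lin_ext (pos_coef i (sigma_m mu)) Y)"
  unfolding unit_supported_def
proof (intro allI impI)
  fix u :: "'b option list" assume u: "None \<notin> set u"
  show "lin_ext (pos_coef i (sigma_m mu)) Y u = 0"
  proof (rule ccontr)
    assume "lin_ext (pos_coef i (sigma_m mu)) Y u \<noteq> 0"
    then obtain w where "pos_coef i (sigma_m mu) w u \<noteq> 0" by (blast dest: lin_ext_nonzeroD)
    from pos_coef_nonzeroD[OF this] have "i - 1 < length u" "u ! (i - 1) = None"
      by (auto simp: sigma_m_def split: if_splits)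
    then show False using u by (metis nth_mem)
  qed
qed

definition has_xi :: "gen list \<Rightarrow> bool" where
  "has_xi ws \<longleftrightarrow> (\<exists>j. Xi j \<in> set ws)"

lemma unit_supported_act_word:
  fixes Y :: "'b option list \<Rightarrow> 'k::field"
  assumes U: "sig_unital sig"
  shows "has_xi ws \<Longrightarrow> unit_supported (act_word sig (sigma_m mu) ws Y)"
proof (induction ws)
  case (Cons g ws)
  show ?case
  proof (cases g)
    case (Sg k)
    then have "has_xi ws" using Cons.prems by (auto simp: has_xi_def)
    then show ?thesis using Cons.IH Sg by (simp add: unit_supported_pos_coef[OF U])
  qed (simp add: unit_supported_sigma_m)
qed (simp add: has_xi_def)

section \<open>The \<open>\<xi>\<close>-free part of \<open>Q(\<sigma>)\<close>\<close>

abbreviation xi_free :: "gen list \<Rightarrow> bool" where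
  "xi_free ws \<equiv> \<not> has_xi ws"

lemma has_xi_append: "has_xi (a @ b) \<longleftrightarrow> has_xi a \<or> has_xi b"
  by (auto simp: has_xi_def)

lemma has_xi_map_Sg: "\<not> has_xi (map Sg w)"
  by (auto simp: has_xi_def)

lemma fmult_Cons: "fmult (a # A) B = map (\<lambda>b. a @ b) B @ fmult A B"
  by (simp add: fmult_def)

lemma fmult_Nil: "fmult [] B = []"
  by (simp add: fmult_def)

lemma filter_fmult: "filter xi_free (fmult A B) = fmult (filter xi_free A) (filter xi_free B)"
proof (induction A)
  case Nil then show ?case by (simp add: fmult_Nil)
next
  case (Cons a A)
  have "filter xi_free (map (\<lambda>b. a @ b) B) = (if xi_free a then map (\<lambda>b. a @ b) (filter xi_free B) else [])"
    by (induction B) (auto simp: has_xi_append)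
  then show ?case using Cons by (simp add: fmult_Cons fmult_Nil)
qed

lemma filter_foldr_fmult:
  "(\<And>k. k \<in> set ks \<Longrightarrow> filter xi_free (G k) = [g k]) \<Longrightarrow>
   filter xi_free (foldr (\<lambda>k acc. fmult (G k) acc) ks [[]]) = [concat (map g ks)]"
proof (induction ks)
  case Nil then show ?case by (simp add: has_xi_def)
next
  case (Cons k ks)
  have ih: "filter xi_free (foldr (\<lambda>k acc. fmult (G k) acc) ks [[]]) = [concat (map g ks)]"
    using Cons by auto
  have "filter xi_free (foldr (\<lambda>k acc. fmult (G k) acc) (k # ks) [[]]) =
        fmult (filter xi_free (G k)) (filter xi_free (foldr (\<lambda>k acc. fmult (G k) acc) ks [[]]))"
    by (simp add: filter_fmult)
  also have "\<dots> = fmult [g k] [concat (map g ks)]" using ih Cons.prems by simp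
  also have "\<dots> = [concat (map g (k # ks))]" by (simp add: fmult_def)
  finally show ?case .
qed

lemma filter_Ffac:
  assumes "tk n \<sigma> k \<le> k"
  shows "filter xi_free (Ffac n \<sigma> k) = [map Sg (bubble_block (tk n \<sigma>) k)]"
proof (cases "tk n \<sigma> k = 0")
  case True then show ?thesis by (simp add: Ffac_def Let_def bubble_block_def has_xi_def)
next
  case False
  define t where "t = tk n \<sigma> k"
  define rest where "rest = map Sg [Suc t..<Suc k]"
  have le: "t \<le> k" using assms unfolding t_def .
  then have up: "map Sg [t..<Suc k] = [Sg t] @ rest" unfolding rest_def by (simp add: upt_conv_Cons)
  have h1: "\<not> has_xi ([Sg t] @ rest)" unfolding rest_def by (auto simp: has_xi_def)
  have h2: "has_xi (map Sg [1..<t] @ [Xi t] @ rest)" by (auto simp: has_xi_def)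
  have F: "Ffac n \<sigma> k = (if Suc t = tk n \<sigma> (Suc k) then [[Sg t] @ rest]
             else [[Sg t] @ rest, map Sg [1..<t] @ [Xi t] @ rest])"
    unfolding Ffac_def Let_def t_def[symmetric] rest_def[symmetric] using False unfolding t_def by simp
  have B: "bubble_block (tk n \<sigma>) k = [t..<Suc k]" using False unfolding bubble_block_def t_def by simp
  show ?thesis unfolding F B up using h1 h2 by simp
qed

lemma concat_map_single:
  "distinct xs \<Longrightarrow> (\<And>j. j \<in> set xs \<Longrightarrow> j \<noteq> k \<Longrightarrow> f j = []) \<Longrightarrow>
   concat (map f xs) = (if k \<in> set xs then f k else [])"
proof (induction xs)
  case Nil then show ?case by simp
next
  case (Cons x xs)
  then show ?case by (cases "x = k") auto
qed

definition ts_single :: "nat \<Rightarrow> nat \<Rightarrow> nat \<Rightarrow> nat" where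
  "ts_single k t = (\<lambda>j. if j = k then t else 0)"

lemma tk_bfac:
  assumes v: "valid_ts n ts" and k: "1 \<le> k" "k < n"
  shows "tk n (bfac ts k) = ts_single k (ts k)"
proof -
  have vs: "valid_ts n (ts_single k (ts k))" using v k unfolding valid_ts_def ts_single_def by auto
  have "bubble_word n (ts_single k (ts k)) = bubble_block (ts_single k (ts k)) k" unfolding bubble_word_def
    by (subst concat_map_single[of _ k]) (use k in \<open>auto simp: bubble_block_def ts_single_def\<close>)
  also have "\<dots> = bubble_block ts k" by (simp add: bubble_block_def ts_single_def)
  finally have "bubble n (ts_single k (ts k)) = bfac ts k" by (metis permword_bubble_word permword_bubble_block)
  then show ?thesis using tk_bubble[OF vs] by simp
qed

lemma filter_Fgvb:
  assumes s: "\<sigma> permutes {1..n}" and k: "1 \<le> k" "k < n"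
  shows "filter xi_free (Fgvb n (bcomp n \<sigma> k)) = [map Sg (bubble_block (tk n \<sigma>) k)]"
proof -
  define ts where "ts = tk n \<sigma>"
  have v: "valid_ts n ts" using tk_valid_bubble[OF s] unfolding ts_def by simp
  have tk1: "tk n (bcomp n \<sigma> k) = ts_single k (ts k)" unfolding bcomp_def ts_def[symmetric]
    by (rule tk_bfac[OF v k])
  have vs: "valid_ts n (ts_single k (ts k))" using v k unfolding valid_ts_def ts_single_def by auto
  have "filter xi_free (Fgvb n (bcomp n \<sigma> k)) = [concat (map (\<lambda>j. map Sg (bubble_block (ts_single k (ts k)) j)) (rev [1..<n]))]"
    unfolding Fgvb_def
  proof (rule filter_foldr_fmult)
    fix j assume "j \<in> set (rev [1..<n])"
    have "tk n (bcomp n \<sigma> k) j \<le> j"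
      using valid_ts_le[OF vs] unfolding tk1 .
    then show "filter xi_free (Ffac n (bcomp n \<sigma> k) j) = [map Sg (bubble_block (ts_single k (ts k)) j)]"
      using filter_Ffac[of n "bcomp n \<sigma> k" j] unfolding tk1 by simp
  qed
  also have "concat (map (\<lambda>j. map Sg (bubble_block (ts_single k (ts k)) j)) (rev [1..<n])) = map Sg (bubble_block ts k)"
    by (subst concat_map_single[of _ k]) (use k in \<open>auto simp: bubble_block_def ts_single_def\<close>)
  finally show ?thesis unfolding ts_def .
qed

lemma bfac_in_shufset:
  assumes v: "valid_ts n ts" and K: "1 \<le> K" "K < n"
  shows "bfac ts K \<in> shufset n 0 K 1"
proof (cases "ts K = 0")
  case True
  then show ?thesis by (simp add: bfac_def shufset_def)
next
  case False
  define t where "t = ts K"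
  have t: "1 \<le> t" "t \<le> K" using False v K unfolding t_def valid_ts_def by auto
  define b where "b = cyc t K"
  have bK: "b permutes {1..Suc K}" unfolding b_def by (rule cyc_permutes) (use t in auto)
  have bn: "b permutes {1..n}" by (rule permutes_subset[OF bK]) (use K in auto)
  have bf: "b x = x" if "x \<notin> {0 + 1..0 + K + 1}" for x
    using permutes_not_in[OF bK, of x] that by auto
  have binv: "inv b a = (if a < t then a else Suc a)" if "1 \<le> a" "a \<le> K" for a
  proof -
    have "b (if a < t then a else Suc a) = a"
      unfolding b_def using cyc_apply[of t K] t that by auto
    then show ?thesis using permutes_inverses(2)[OF bK, of "if a < t then a else Suc a"] by simp
  qed
  have mono: "inv b a < inv b c" if "0 + 1 \<le> a" "a < c" "c \<le> 0 + K" for a c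
    using binv[of a] binv[of c] that by auto
  show ?thesis unfolding shufset_def bfac_def using False bn bf mono unfolding t_def[symmetric] b_def
    by auto
qed

lemma lv_map_Sg: "lv (map Sg w) = 0"
  by (simp add: lv_def)

lemma concat_map_filter_nil:
  "(\<And>x. x \<in> set T \<Longrightarrow> \<not> P x \<Longrightarrow> f x = []) \<Longrightarrow> concat (map f T) = concat (map f (filter P T))"
  by (induction T) auto

lemma filter_xi_free_map_append: "\<not> has_xi \<tau> \<Longrightarrow> filter xi_free (map (\<lambda>w. w @ \<tau>) L) = map (\<lambda>w. w @ \<tau>) (filter xi_free L)"
  by (induction L) (auto simp: has_xi_append)

lemma filter_Qrec:
  assumes s: "\<sigma> permutes {1..n}"
  shows "k < n \<Longrightarrow> filter xi_free (Qrec n \<sigma> k) = [map Sg (bubble_word (Suc k) (tk n \<sigma>))]"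
proof (induction k)
  case 0 then show ?case by (simp add: bubble_word_le_1 has_xi_def)
next
  case (Suc k)
  define ts where "ts = tk n \<sigma>"
  have v: "valid_ts n ts" using tk_valid_bubble[OF s] unfolding ts_def by simp
  define \<tau>0 where "\<tau>0 = map Sg (bubble_word (Suc k) ts)"
  have IH: "filter xi_free (Qrec n \<sigma> k) = [\<tau>0]" using Suc unfolding \<tau>0_def ts_def by simp
  define \<sigma>' where "\<sigma>' = bcomp n \<sigma> (Suc k)"
  define \<phi> where "\<phi> = (\<lambda>\<tau>. if lv \<tau> < Suc k \<and> \<sigma>' \<in> shufset n (lv \<tau>) (Suc k - lv \<tau>) 1
      then map (\<lambda>w. w @ \<tau>) (Fgvb n \<sigma>') else [])"
  have Q: "Qrec n \<sigma> (Suc k) = concat (map \<phi> (Qrec n \<sigma> k))"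
    unfolding \<phi>_def \<sigma>'_def by (simp add: Mgvb_def)
  have z: "filter xi_free (\<phi> \<tau>) = []" if "\<not> xi_free \<tau>" for \<tau>
    using that unfolding \<phi>_def by (auto simp: filter_empty_conv has_xi_append)
  have "filter xi_free (Qrec n \<sigma> (Suc k)) = concat (map (filter xi_free \<circ> \<phi>) (Qrec n \<sigma> k))"
    unfolding Q filter_concat by simp
  also have "\<dots> = concat (map (filter xi_free \<circ> \<phi>) (filter xi_free (Qrec n \<sigma> k)))"
    by (rule concat_map_filter_nil) (simp add: z)
  also have "\<dots> = filter xi_free (\<phi> \<tau>0)" unfolding IH by simp
  also have "\<phi> \<tau>0 = map (\<lambda>w. w @ \<tau>0) (Fgvb n \<sigma>')"
  proof -
    have "\<sigma>' \<in> shufset n 0 (Suc k) 1" unfolding \<sigma>'_def bcomp_def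
      by (rule bfac_in_shufset[OF tk_valid_bubble[OF s, THEN conjunct1]]) (use Suc in auto)
    then show ?thesis unfolding \<phi>_def \<tau>0_def by (simp add: lv_map_Sg)
  qed
  also have "filter xi_free (map (\<lambda>w. w @ \<tau>0) (Fgvb n \<sigma>')) = map (\<lambda>w. w @ \<tau>0) (filter xi_free (Fgvb n \<sigma>'))"
    by (rule filter_xi_free_map_append) (simp add: \<tau>0_def has_xi_map_Sg)
  also have "filter xi_free (Fgvb n \<sigma>') = [map Sg (bubble_block ts (Suc k))]"
    unfolding \<sigma>'_def ts_def by (rule filter_Fgvb[OF s]) (use Suc in auto)
  finally show ?case unfolding \<tau>0_def ts_def[symmetric] by (simp add: bubble_word_Suc)
qed

lemma sum_list_filter0:
  "(\<And>x. x \<in> set xs \<Longrightarrow> \<not> P x \<Longrightarrow> f x = (0::'k::comm_monoid_add)) \<Longrightarrow>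
   sum_list (map f xs) = sum_list (map f (filter P xs))"
  by (induction xs) auto

lemma sum_list_nonzeroD: "sum_list (map f xs) \<noteq> (0::'k::comm_monoid_add) \<Longrightarrow> \<exists>x\<in>set xs. f x \<noteq> 0"
  by (induction xs) auto

lemma iota_nonzero_length:
  assumes "\<And>w. y w \<noteq> 0 \<Longrightarrow> length w = k" and "iota y u \<noteq> 0"
  shows "length u = k"
  using assms(2) assms(1)[of "map the u"] by (simp add: iota_def split: if_splits)

lemma Qact_nonzero_length:
  fixes Y :: "'b option list \<Rightarrow> 'k::field"
  assumes Y: "\<And>w. Y w \<noteq> 0 \<Longrightarrow> length w = k" and nz: "Qact sig mu k Y u \<noteq> 0"
  shows "length u = k"
proof -
  obtain \<sigma> where "sum_list (map (\<lambda>\<tau>. act_word sig (sigma_m mu) \<tau> Y u) (Qgvb k \<sigma>)) \<noteq> 0"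
    using nz unfolding Qact_def by (rule sum.not_neutral_contains_not_neutral)
  then obtain \<tau> where "act_word sig (sigma_m mu) \<tau> Y u \<noteq> 0" by (blast dest: sum_list_nonzeroD)
  from act_word_nonzero_length[OF Y this] show ?thesis .
qed

lemma Ddel_map_Some:
  fixes X :: "'b option list \<Rightarrow> 'k::field"
  assumes X: "\<And>w. X w \<noteq> 0 \<Longrightarrow> length w = length v"
  shows "Ddel X v = X (map Some v)"
proof -
  define S where "S = {w. X w \<noteq> 0 \<and> map the (filter (\<lambda>a. a \<noteq> None) w) = v}"
  have "S \<subseteq> {map Some v}"
  proof
    fix w assume "w \<in> S"
    then have e: "map the (filter (\<lambda>a. a \<noteq> None) w) = v" and "length w = length v"
      using X unfolding S_def by auto
    then have "length (filter (\<lambda>a. a \<noteq> None) w) = length w" by (metis length_map)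
    then have nn: "None \<notin> set w" using length_filter_less[of None w "\<lambda>a. a \<noteq> None"] by auto
    then have "filter (\<lambda>a. a \<noteq> None) w = w" by (intro filter_True ballI notI) simp
    then show "w \<in> {map Some v}" using e map_the_Some[OF nn] by simp
  qed
  moreover have "map Some v \<in> S \<longleftrightarrow> X (map Some v) \<noteq> 0"
    unfolding S_def by (simp add: comp_def filter_id_conv)
  ultimately have "sum X S = X (map Some v)"
    by (cases "map Some v \<in> S") (auto simp: subset_singleton_iff)
  then show ?thesis unfolding Ddel_def S_def .
qed

lemma Ddel_short:
  fixes X :: "'b option list \<Rightarrow> 'k::field"
  assumes X: "\<And>w. X w \<noteq> 0 \<Longrightarrow> length w = k" and v: "k < length v"
  shows "Ddel X v = 0"
proof -
  have "length v \<le> length w" if "map the (filter (\<lambda>a. a \<noteq> None) w) = v" for w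
    using that length_filter_le[of "\<lambda>a. a \<noteq> None" w] by (metis length_map)
  then have empty: "{w. X w \<noteq> 0 \<and> map the (filter (\<lambda>a. a \<noteq> None) w) = v} = {}"
    using X v by (auto dest: leD)
  show ?thesis unfolding Ddel_def empty by simp
qed

lemma act_word_zero: "act_word c cx ws (\<lambda>_. 0 :: 'k::field) = (\<lambda>_. 0)"
  by (induction ws) (simp_all add: lin_ext_zero)

lemma rowfin_zero: "rowfin (\<lambda>_ _. 0 :: 'k::field)"
  by (simp add: rowfin_def)

lemma deg_nonzero_length: "deg k x w \<noteq> 0 \<Longrightarrow> length w = k"
  by (simp add: deg_def split: if_splits)

lemma fsupp_deg: "finite {w. x w \<noteq> 0} \<Longrightarrow> fsupp (deg k x)"
  unfolding fsupp_def deg_def by (rule finite_subset[rotated]) auto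

section \<open>The top-degree part of \<open>QS\<close>\<close>

lemma braided_unital_settingD:
  assumes "braided_unital_setting sig mu"
  shows "rowfin sig" "braid_rel sig" "sig_unital sig" "sig_closed sig"
  using assms unfolding braided_unital_setting_def rowfin_def braid_rel_def sig_unital_def sig_closed_def
  by blast+

text \<open>On tensors \<open>\<iota>(y)\<close> without unit factors, \<open>Q(\<sigma>)\<close> acts through its unique \<open>\<xi>\<close>-free word, the bubble
  word of \<open>\<sigma>\<close>: every word containing a \<open>\<xi>\<close> yields a unit factor.\<close>

lemma Qgvb_act_iota:
  assumes BU: "braided_unital_setting sig mu" and n: "1 \<le> n" and \<sigma>: "\<sigma> permutes {1..n}"
  shows "sum_list (map (\<lambda>\<tau>. act_word sig (sigma_m mu) \<tau> (iota y) (map Some v)) (Qgvb n \<sigma>))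
       = act_word (sigV sig) (\<lambda>_ _. 0) (map Sg (bubble_word n (tk n \<sigma>))) y v"
proof -
  have "sum_list (map (\<lambda>\<tau>. act_word sig (sigma_m mu) \<tau> (iota y) (map Some v)) (Qgvb n \<sigma>))
      = sum_list (map (\<lambda>\<tau>. act_word sig (sigma_m mu) \<tau> (iota y) (map Some v)) (filter xi_free (Qgvb n \<sigma>)))"
    using unit_supported_act_word[OF braided_unital_settingD(3)[OF BU]]
    by (intro sum_list_filter0) (simp add: unit_supported_def)
  also have "filter xi_free (Qgvb n \<sigma>) = [map Sg (bubble_word n (tk n \<sigma>))]"
    using filter_Qrec[OF \<sigma>, of "n - 1"] n unfolding Qgvb_def by simp
  finally show ?thesis
    by (simp add: act_word_iota[OF braided_unital_settingD(4)[OF BU], where cx'="\<lambda>_ _. 0"] iota_Some)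
qed

lemma act_word_reduced_word:
  fixes sig :: "'b option \<times> 'b option \<Rightarrow> 'b option \<times> 'b option \<Rightarrow> 'k::field"
  assumes BU: "braided_unital_setting sig mu" and \<sigma>: "\<sigma> permutes {1..n}"
    and y: "fsupp y" "\<And>w. y w \<noteq> 0 \<Longrightarrow> length w = n"
  shows "act_word (sigV sig) (\<lambda>_ _. 0) (map Sg (SOME is. reduced_word n \<sigma> is)) y
       = act_word (sigV sig) (\<lambda>_ _. 0) (map Sg (bubble_word n (tk n \<sigma>))) y"
proof -
  have "reduced_word n \<sigma> (SOME is. reduced_word n \<sigma> is)"
    using ex_reduced_word[OF \<sigma>] by (rule someI_ex)
  then have "braid_equiv n (SOME is. reduced_word n \<sigma> is) (bubble_word n (tk n \<sigma>))"
    by (rule reduced_word_braid_equiv[OF \<sigma>])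
  then show ?thesis
    using braided_unital_settingD[OF BU] y
    by (intro act_word_braid_equiv rowfin_sigV rowfin_zero braid_rel_sigV) auto
qed

lemma QSn_eq_Tn:
  fixes sig :: "'b option \<times> 'b option \<Rightarrow> 'b option \<times> 'b option \<Rightarrow> 'k::field"
  assumes BU: "braided_unital_setting sig mu" and n: "1 \<le> n"
    and y: "fsupp y" "\<And>w. y w \<noteq> 0 \<Longrightarrow> length w = n" and v: "length v = n"
  shows "QSn sig mu n y v = Tn sig n y v"
proof -
  have "length u = length v" if "Qact sig mu n (iota y) u \<noteq> 0" for u
    using Qact_nonzero_length[OF iota_nonzero_length[OF y(2)] that] v by simp
  then have "QSn sig mu n y v = Qact sig mu n (iota y) (map Some v)"
    unfolding QSn_def by (rule Ddel_map_Some)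
  also have "\<dots> = Tn sig n y v"
    unfolding Qact_def Tn_def
    using Qgvb_act_iota[OF BU n] act_word_reduced_word[OF BU _ y] by (intro sum.cong) auto
  finally show ?thesis .
qed

lemma QS_eq_QSn_top:
  assumes x: "finite {w. x w \<noteq> 0}" "\<forall>w. x w \<noteq> 0 \<longrightarrow> length w \<le> n" and v: "length v = n"
  shows "QS sig mu x v = QSn sig mu n (deg n x) v"
proof -
  define L where "L = length ` {w. x w \<noteq> 0}"
  have low: "QSn sig mu k (deg k x) v = 0" if "k \<in> L" "k \<noteq> n" for k
  proof -
    have "k < length v" using that x(2) v unfolding L_def by fastforce
    moreover have "length u = k" if "Qact sig mu k (iota (deg k x)) u \<noteq> 0" for u
      using Qact_nonzero_length[OF iota_nonzero_length[OF deg_nonzero_length] that] .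
    ultimately show ?thesis unfolding QSn_def by (intro Ddel_short)
  qed
  have "QS sig mu x v = (\<Sum>k\<in>L. QSn sig mu k (deg k x) v)" unfolding QS_def L_def ..
  also have "\<dots> = (\<Sum>k\<in>L. if k = n then QSn sig mu n (deg n x) v else 0)"
    using low by (intro sum.cong) auto
  also have "\<dots> = (if n \<in> L then QSn sig mu n (deg n x) v else 0)"
    using x(1) unfolding L_def by simp
  also have "\<dots> = QSn sig mu n (deg n x) v"
  proof -
    have "deg n x = (\<lambda>_. 0)" if "n \<notin> L" using that unfolding L_def deg_def by force
    moreover have "QSn sig mu n (\<lambda>_. 0) v = 0"
      by (simp add: QSn_def Qact_def Ddel_def iota_def act_word_zero)
    ultimately show ?thesis by auto
  qed
  finally show ?thesis .
qed

lemma Tn_nonzero_length: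
  fixes y :: "'b list \<Rightarrow> 'k::field"
  assumes "\<And>w. y w \<noteq> 0 \<Longrightarrow> length w = n" and "Tn sig n y v \<noteq> 0"
  shows "length v = n"
proof -
  obtain s where "act_word (sigV sig) (\<lambda>_ _. 0) (map Sg (SOME is. reduced_word n s is)) y v \<noteq> 0"
    using assms(2) unfolding Tn_def by (rule sum.not_neutral_contains_not_neutral)
  from act_word_nonzero_length[OF assms(1) this] show ?thesis .
qed

theorem lemma5:
  fixes sig :: "'b option \<times> 'b option \<Rightarrow> 'b option \<times> 'b option \<Rightarrow> 'k::field"
    and mu :: "'b option \<times> 'b option \<Rightarrow> 'b option \<Rightarrow> 'k"
    and n :: nat
    and x :: "'b list \<Rightarrow> 'k"
  assumes "braided_unital_setting sig mu"
    and "n \<ge> 2"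
    and "finite {w. x w \<noteq> 0}"
    and "\<forall>w. x w \<noteq> 0 \<longrightarrow> length w \<le> n"
    and "\<forall>v. QS sig mu x v = 0"
  shows "\<forall>v. Tn sig n (deg n x) v = 0"
proof
  fix v
  show "Tn sig n (deg n x) v = 0"
  proof (cases "length v = n")
    case True
    have "1 \<le> n" using assms(2) by simp
    have "Tn sig n (deg n x) v = QSn sig mu n (deg n x) v"
      by (rule QSn_eq_Tn[OF assms(1) \<open>1 \<le> n\<close> fsupp_deg[OF assms(3)] deg_nonzero_length True, symmetric])
    also have "\<dots> = QS sig mu x v" using QS_eq_QSn_top[OF assms(3,4) True] by simp
    finally show ?thesis using assms(5) by simp
  next
    case False
    show ?thesis
    proof (rule ccontr)
      assume "Tn sig n (deg n x) v \<noteq> 0"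
      from Tn_nonzero_length[OF deg_nonzero_length this] False show False by simp
    qed
  qed
qed

end
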